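(* In the standing setting, assume (A1), (A3), (A4) and (A7), and consider the coupled chains. Then there exist $h_0>0$ and $C>0$, independent of $s,h,k$, such that for all $s\in\mathbb N_+$, $h\in(0,h_0)$ and all $k\ge1$, $$\mathbb E|X^{c+,f}_k-X^{c-,f}_k|^4\le C\frac{h^2}{s^2}.$$
   Context: Standing setting. Let $d,n\in\mathbb N_+$, $\beta\ge0$, and let $a:\mathbb R^d\to\mathbb R^d$, $b:\mathbb R^d\times\mathbb R^n\to\mathbb R^d$ be measurable. $|\cdot|$ is the Euclidean norm (Frobenius norm for matrices), $\nabla$ the Jacobian in $x$, $D^\alpha$ the partial derivative in $x$ for a multi-index $\alpha$. For each $s\in\mathbb N_+$ a law on $\mathbb R^n$ is given; a random variable with this law is a drift variable at level $s$ (generically $U^s$), and $\mathbb E[b(x,U^s)]=a(x)$ for all $x$. All constants below are independent of $s,x,y$. (A1) $|a(x)-a(y)|\le L|x-y|$; $\langle x-y,a(x)-a(y)\rangle\le-K|x-y|^2$ with $K>0$; $a\in C^2$ with $|D^\alpha a|\le C_{a^{(|\alpha|)}}$ for $|\alpha|=1,2$. (A2) $\mathbb E|b(x,U^s)-b(y,U^s)|^2\le\bar L^2|x-y|^2$. (A3) $\mathbb E|b(x,U^s)-a(x)|^2\le\sigma_s^2(1+|x|^2)$ with $\sigma_s^2\le\kappa/s$. (A4) $\mathbb E|b(x,U^s)-a(x)|^4\le\sigma^{(4)}_s(1+|x|^4)$ with $\sigma^{(4)}_s\le\kappa/s^2$. (A5) for every $u$, $x\mapsto b(x,u)$ is $C^2$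 with $|D^\alpha b(x,u)|\le C_{b^{(2)}}$ for $|\alpha|=2$, and $\mathbb E|\nabla b(x,U^s)-\nabla a(x)|^4\le\sigma^{(4)}_s(1+|x|^4)$. (A6) $\mathbb E[D^\alpha b(x,U^s)]=D^\alpha a(x)$ for $|\alpha|\le2$. (A7) $|a(x)|^4\le L_0^{(4)}(1+|x|^4)$. (A8) every drift variable $U^{2s}$ at level $2s$ determines (measurably) two drift variables $U^{2s,1},U^{2s,2}$ at level $s$ with $b(x,U^{2s})=\frac12b(x,U^{2s,1})+\frac12b(x,U^{2s,2})$ for all $x$. Coupled chains. Fix $s\in\mathbb N_+$, $h>0$. Let $(Z_k)_{k\ge1}$ be i.i.d. $N(0,I_d)$, $(U^f_k)_{k\ge0}$ i.i.d. drift variables at level $2s$, and $X_0$ an $\mathbb R^d$-valued random variable with $\mathbb E|X_0|^4<\infty$, all independent; let $U^{f,1}_k,U^{f,2}_k$ be the level-$s$ variables given by (A8). Put $V^f_k=U^f_k$, $V^{c-}_k=U^{f,1}_k$, $V^{c+}_k=U^{f,2}_k$. For $j\in\{f,c-,c+\}$, all chains start at $X_0$: $X^{j,f}_{k+1}=X^{j,f}_k+hb(X^{j,f}_k,V^j_k)+\beta\sqrt hZ_{k+1}$ ($k\ge0$); for even $k\ge0$: $X^{j,c-}_{k+2}=X^{j,c-}_k+2hb(X^{j,c-}_k,V^j_k)+\beta\sqrt h(Z_{k+1}+Z_{k+2})$, $X^{j,c+}_{k+2}=X^{j,c+}_k+2hb(X^{j,c+}_k,V^j_{k+1})+\beta\sqrt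 h(Z_{k+1}+Z_{k+2})$. Exact-drift chains from $X_0$: $X_{k+1}=X_k+ha(X_k)+\beta\sqrt hZ_{k+1}$ and, for even $k$, $X^c_{k+2}=X^c_k+2ha(X^c_k)+\beta\sqrt h(Z_{k+1}+Z_{k+2})$. Averages: $\bar X^{j,c}_k=\frac12(X^{j,c-}_k+X^{j,c+}_k)$, $\bar X^{c,f}_k=\frac12(X^{c-,f}_k+X^{c+,f}_k)$. *)

theory Defs
  imports "HOL-Probability.Probability"
begin

primrec fine_chain ::
  "real \<Rightarrow> real \<Rightarrow> ('x::real_normed_vector \<Rightarrow> 'u \<Rightarrow> 'x) \<Rightarrow> ('w \<Rightarrow> 'x)
     \<Rightarrow> (nat \<Rightarrow> 'w \<Rightarrow> 'x) \<Rightarrow> (nat \<Rightarrow> 'w \<Rightarrow> 'u) \<Rightarrow> nat \<Rightarrow> 'w \<Rightarrow> 'x" where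
  "fine_chain h \<beta> b X0 Z V 0 \<omega> = X0 \<omega>"
| "fine_chain h \<beta> b X0 Z V (Suc k) \<omega> =
     fine_chain h \<beta> b X0 Z V k \<omega> + h *\<^sub>R b (fine_chain h \<beta> b X0 Z V k \<omega>) (V k \<omega>)
       + (\<beta> * sqrt h) *\<^sub>R Z (Suc k) \<omega>"

text \<open>Index set for the independent family: X0, the Gaussian vectors Z_k (k >= 1),
  and the drift variables U_k (k >= 0).\<close>
datatype rv_idx = IX0 | IZ nat | IU nat

definition rv_indep ::
  "'w measure \<Rightarrow> ('w \<Rightarrow> real^'d) \<Rightarrow> (nat \<Rightarrow> 'w \<Rightarrow> real^'d) \<Rightarrow> (nat \<Rightarrow> 'w \<Rightarrow> 'u::topological_space) \<Rightarrow> bool" where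
  "rv_indep M X0 Z U \<longleftrightarrow>
     prob_space.indep_sets M
       (\<lambda>i. case i of
              IX0 \<Rightarrow> sets (vimage_algebra (space M) X0 borel)
            | IZ k \<Rightarrow> sets (vimage_algebra (space M) (Z k) borel)
            | IU k \<Rightarrow> sets (vimage_algebra (space M) (U k) borel))
       {i. i \<noteq> IZ 0}"

definition std_gaussian_vec :: "'w measure \<Rightarrow> ('w \<Rightarrow> real^'d) \<Rightarrow> bool" where
  "std_gaussian_vec M Z \<longleftrightarrow>
     prob_space.indep_vars M (\<lambda>_. borel) (\<lambda>i \<omega>. Z \<omega> $ i) UNIV \<and>
     (\<forall>i. distributed M lborel (\<lambda>\<omega>. Z \<omega> $ i) std_normal_density)"

end

theory Submission
  imports Defs
begin

text \<open>Both coupled chains start at X0 and use the same Gaussian increments, so their difference D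
  evolves by D + h (a(Y1) - a(Y2)) plus the difference of two drift noises which have mean zero given
  the past and, at level s, are of order s^(-1/2) in L2 and L4 (relative to 1 + |Y|).
  Strong monotonicity and the Lipschitz bound make the deterministic part contract,
  |D + h (a Y1 - a Y2)|^2 <= (1 - K h) |D|^2, and for mean-zero noise B one has
  E|A + B|^4 <= |A|^4 + 8 |A|^2 E|B|^2 + 3 E|B|^4. With Young's inequality this gives
  E|D'|^4 <= (1 - K h/2) E|D|^4 + C h^3/s^2 (1 + E|Y1|^4 + E|Y2|^4). The same computation for a single
  chain, now including the Gaussian increment, bounds E|Y|^4 uniformly in k, and the linear recursion
  for E|D|^4 then stays below 2 C' h^3 / (K h s^2) = O(h^2/s^2).\<close>

lemma norm_add_power4_le:
  fixes x y :: "'v::real_inner"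
  shows "norm (x + y)^4 \<le> norm x^4 + 4 * norm x^2 * inner x y + 8 * norm x^2 * norm y^2 + 3 * norm y^4"
proof -
  define p where "p = norm x ^ 2"
  define q where "q = norm y ^ 2"
  define r where "r = inner x y"
  have sq: "norm (x + y)^2 = p + 2 * r + q"
    unfolding p_def q_def r_def power2_norm_eq_inner by (simp add: inner_add inner_commute)
  have cauchy_schwarz: "r^2 \<le> p * q"
  proof -
    have "\<bar>r\<bar> \<le> norm x * norm y" unfolding r_def by (rule Cauchy_Schwarz_ineq2)
    then have "r^2 \<le> (norm x * norm y)^2"
      by (metis abs_ge_zero abs_le_square_iff abs_mult abs_norm_cancel)
    then show ?thesis by (simp add: p_def q_def power_mult_distrib)
  qed
  have "p + q - 2 * r = norm (x - y)^2"
    unfolding p_def q_def r_def power2_norm_eq_inner by (simp add: inner_diff inner_commute)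
  then have "q * (p + q - 2 * r) \<ge> 0" unfolding q_def by simp
  have "norm (x + y)^4 = (p + 2 * r + q)^2"
    by (simp flip: sq power_mult)
  also have "\<dots> \<le> p^2 + 4 * p * r + 8 * p * q + 3 * q^2"
    using cauchy_schwarz \<open>q * (p + q - 2 * r) \<ge> 0\<close> by (simp add: power2_eq_square algebra_simps)
  finally show ?thesis
    unfolding p_def q_def r_def by (simp flip: power_mult)
qed

lemma norm_diff_power2_le: "norm (x - y)^2 \<le> 2 * (norm x^2 + norm (y::'a::real_normed_vector)^2)"
proof -
  have "norm (x - y)^2 \<le> (norm x + norm y)^2"
    by (intro power_mono norm_triangle_ineq4) auto
  also have "\<dots> \<le> 2 * (norm x^2 + norm y^2)"
    using zero_le_power2[of "norm x - norm y"] by (simp add: power2_eq_square algebra_simps)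
  finally show ?thesis .
qed

lemma norm_add_power2_le: "norm (x + y)^2 \<le> 2 * (norm x^2 + norm (y::'a::real_normed_vector)^2)"
  using norm_diff_power2_le[of x "-y"] by simp

lemma norm_diff_power4_le: "norm (x - y)^4 \<le> 8 * (norm x^4 + norm (y::'a::real_normed_vector)^4)"
proof -
  have "norm (x - y)^4 = (norm (x - y)^2)^2" by (simp flip: power_mult)
  also have "\<dots> \<le> (2 * (norm x^2 + norm y^2))^2"
    by (intro power_mono norm_diff_power2_le) auto
  also have "\<dots> \<le> 8 * ((norm x^2)^2 + (norm y^2)^2)"
    using zero_le_power2[of "norm x^2 - norm y^2"] by (simp add: power2_eq_square algebra_simps)
  finally show ?thesis by (simp flip: power_mult)
qed

lemma mult_le_weighted_sum_squares:
  fixes x y e :: real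
  assumes "0 < e"
  shows "x * y \<le> e/2 * x^2 + y^2 / (2*e)"
proof -
  have "0 \<le> (e * x - y)^2 / (2*e)" using assms by simp
  also have "(e * x - y)^2 / (2*e) = e/2 * x^2 + y^2 / (2*e) - x * y"
    using assms by (simp add: power2_eq_square field_simps)
  finally show ?thesis by simp
qed

lemma ennreal_affine_recursion_le:
  fixes x :: "nat \<Rightarrow> ennreal"
  assumes step: "\<And>k. x (Suc k) \<le> ennreal (1 - q) * x k + ennreal c"
    and start: "x 0 \<le> ennreal B"
    and q: "0 \<le> q" "q \<le> 1" and c: "0 \<le> c" "c \<le> q * B" and B: "0 \<le> B"
  shows "x k \<le> ennreal B"
proof (induction k)
  case 0
  show ?case by (rule start)
next
  case (Suc k)
  have "x (Suc k) \<le> ennreal (1 - q) * x k + ennreal c" by (rule step)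
  also have "\<dots> \<le> ennreal (1 - q) * ennreal B + ennreal c"
    using Suc.IH by (intro add_mono mult_left_mono) auto
  also have "\<dots> = ennreal ((1 - q) * B + c)"
    using q c B by (simp add: ennreal_mult ennreal_plus)
  also have "\<dots> \<le> ennreal B"
    using c by (intro ennreal_leI) (simp add: algebra_simps)
  finally show ?case .
qed

lemma nn_integral_norm_scaleR_power:
  assumes "f \<in> borel_measurable N"
  shows "(\<integral>\<^sup>+x. ennreal (norm (c *\<^sub>R f x)^n) \<partial>N) = ennreal (\<bar>c\<bar>^n) * (\<integral>\<^sup>+x. ennreal (norm (f x)^n) \<partial>N)"
proof -
  have "(\<integral>\<^sup>+x. ennreal (norm (c *\<^sub>R f x)^n) \<partial>N) = (\<integral>\<^sup>+x. ennreal (\<bar>c\<bar>^n) * ennreal (norm (f x)^n) \<partial>N)"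
    by (intro nn_integral_cong) (simp add: ennreal_mult[symmetric] power_mult_distrib)
  also have "\<dots> = ennreal (\<bar>c\<bar>^n) * (\<integral>\<^sup>+x. ennreal (norm (f x)^n) \<partial>N)"
    by (rule nn_integral_cmult) (use assms in measurable)
  finally show ?thesis .
qed

lemma nn_integral_le_cmult_add:
  assumes F: "\<And>x. F x \<le> c * (f x + g x)" and c: "0 \<le> c"
    and f: "f \<in> borel_measurable N" "\<And>x. 0 \<le> f x" and g: "g \<in> borel_measurable N" "\<And>x. 0 \<le> g x"
    and fA: "(\<integral>\<^sup>+x. ennreal (f x) \<partial>N) \<le> ennreal A" and gB: "(\<integral>\<^sup>+x. ennreal (g x) \<partial>N) \<le> ennreal B"
    and AB: "0 \<le> A" "0 \<le> B"
  shows "(\<integral>\<^sup>+x. ennreal (F x) \<partial>N) \<le> ennreal (c * (A + B))"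
proof -
  have "(\<integral>\<^sup>+x. ennreal (F x) \<partial>N) \<le> (\<integral>\<^sup>+x. ennreal c * (ennreal (f x) + ennreal (g x)) \<partial>N)"
  proof (rule nn_integral_mono)
    fix x
    have "ennreal c * (ennreal (f x) + ennreal (g x)) = ennreal (c * (f x + g x))"
      using c f(2)[of x] g(2)[of x] by (simp add: ennreal_mult ennreal_plus)
    then show "ennreal (F x) \<le> ennreal c * (ennreal (f x) + ennreal (g x))"
      using F[of x] by (simp add: ennreal_leI)
  qed
  also have "\<dots> = ennreal c * ((\<integral>\<^sup>+x. ennreal (f x) \<partial>N) + (\<integral>\<^sup>+x. ennreal (g x) \<partial>N))"
  proof -
    have fm: "(\<lambda>x. ennreal (f x)) \<in> borel_measurable N" and gm: "(\<lambda>x. ennreal (g x)) \<in> borel_measurable N"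
      using f g by auto
    have "(\<integral>\<^sup>+x. ennreal c * (ennreal (f x) + ennreal (g x)) \<partial>N) = ennreal c * (\<integral>\<^sup>+x. (ennreal (f x) + ennreal (g x)) \<partial>N)"
      by (rule nn_integral_cmult) (use fm gm in auto)
    also have "(\<integral>\<^sup>+x. (ennreal (f x) + ennreal (g x)) \<partial>N) = (\<integral>\<^sup>+x. ennreal (f x) \<partial>N) + (\<integral>\<^sup>+x. ennreal (g x) \<partial>N)"
      by (rule nn_integral_add) (use fm gm in auto)
    finally show ?thesis .
  qed
  also have "\<dots> \<le> ennreal c * (ennreal A + ennreal B)"
    by (intro mult_left_mono add_mono fA gB) auto
  also have "\<dots> = ennreal (c * (A + B))" using c AB by (simp add: ennreal_mult)
  finally show ?thesis .
qed

context prob_space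
begin

lemma nn_integral_add_cmult_const_le:
  assumes f: "f \<in> borel_measurable M" "\<And>x. 0 \<le> f x" and g: "g \<in> borel_measurable M" "\<And>x. 0 \<le> g x"
    and c: "0 \<le> c1" "0 \<le> c2" and X: "(\<integral>\<^sup>+x. ennreal (f x) \<partial>M) \<le> ennreal X" and Y: "(\<integral>\<^sup>+x. ennreal (g x) \<partial>M) \<le> ennreal Y"
    and XY: "0 \<le> X" "0 \<le> Y"
  shows "(\<integral>\<^sup>+x. ennreal (f x + c1 * g x + c2) \<partial>M) \<le> ennreal (X + c1 * Y + c2)"
proof -
  have fm: "(\<lambda>x. ennreal (f x)) \<in> borel_measurable M" and gm: "(\<lambda>x. ennreal c1 * ennreal (g x)) \<in> borel_measurable M"
    using f g by auto
  have "(\<integral>\<^sup>+x. ennreal (f x + c1 * g x + c2) \<partial>M) = (\<integral>\<^sup>+x. (ennreal (f x) + ennreal c1 * ennreal (g x)) + ennreal c2 \<partial>M)"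
    using f g c by (intro nn_integral_cong) (simp add: ennreal_plus ennreal_mult)
  also have "\<dots> = (\<integral>\<^sup>+x. (ennreal (f x) + ennreal c1 * ennreal (g x)) \<partial>M) + (\<integral>\<^sup>+x. ennreal c2 \<partial>M)"
    by (rule nn_integral_add) (use fm gm in auto)
  also have "(\<integral>\<^sup>+x. (ennreal (f x) + ennreal c1 * ennreal (g x)) \<partial>M) = (\<integral>\<^sup>+x. ennreal (f x) \<partial>M) + (\<integral>\<^sup>+x. ennreal c1 * ennreal (g x) \<partial>M)"
    by (rule nn_integral_add) (use fm gm in auto)
  also have "(\<integral>\<^sup>+x. ennreal c1 * ennreal (g x) \<partial>M) = ennreal c1 * (\<integral>\<^sup>+x. ennreal (g x) \<partial>M)"
    by (rule nn_integral_cmult) (use g in auto)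
  also have "(\<integral>\<^sup>+x. ennreal c2 \<partial>M) = ennreal c2" by (simp add: emeasure_space_1)
  also have "(\<integral>\<^sup>+x. ennreal (f x) \<partial>M) + ennreal c1 * (\<integral>\<^sup>+x. ennreal (g x) \<partial>M) + ennreal c2
      \<le> ennreal X + ennreal c1 * ennreal Y + ennreal c2"
    by (intro add_mono mult_left_mono X Y) auto
  also have "\<dots> = ennreal (X + c1 * Y + c2)" using c XY by (simp add: ennreal_plus ennreal_mult)
  finally show ?thesis .
qed

lemma nn_integral_affine_le:
  assumes f: "f \<in> borel_measurable M" "\<And>x. 0 \<le> f x"
    and g: "g \<in> borel_measurable M" "\<And>x. 0 \<le> g x" "(\<integral>\<^sup>+x. ennreal (g x) \<partial>M) \<le> ennreal B"
    and coeffs: "0 \<le> \<alpha>" "0 \<le> \<gamma>" "0 \<le> B"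
  shows "(\<integral>\<^sup>+x. ennreal (\<alpha> * f x + \<gamma> * (1 + g x)) \<partial>M)
    \<le> ennreal \<alpha> * (\<integral>\<^sup>+x. ennreal (f x) \<partial>M) + ennreal (\<gamma> * (1 + B))"
proof -
  have fm: "(\<lambda>x. ennreal (f x)) \<in> borel_measurable M" and gm: "(\<lambda>x. ennreal (g x)) \<in> borel_measurable M"
    using f g by auto
  have split: "(\<integral>\<^sup>+x. ennreal (\<alpha> * f x + \<gamma> * (1 + g x)) \<partial>M)
      = (\<integral>\<^sup>+x. ennreal \<alpha> * ennreal (f x) \<partial>M) + (\<integral>\<^sup>+x. ennreal \<gamma> * (1 + ennreal (g x)) \<partial>M)"
  proof -
    have "(\<integral>\<^sup>+x. ennreal (\<alpha> * f x + \<gamma> * (1 + g x)) \<partial>M)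
        = (\<integral>\<^sup>+x. ennreal \<alpha> * ennreal (f x) + ennreal \<gamma> * (1 + ennreal (g x)) \<partial>M)"
      using f g coeffs by (intro nn_integral_cong) (simp add: ennreal_plus ennreal_mult)
    also have "\<dots> = (\<integral>\<^sup>+x. ennreal \<alpha> * ennreal (f x) \<partial>M) + (\<integral>\<^sup>+x. ennreal \<gamma> * (1 + ennreal (g x)) \<partial>M)"
      by (rule nn_integral_add) (use fm gm in auto)
    finally show ?thesis .
  qed
  have first: "(\<integral>\<^sup>+x. ennreal \<alpha> * ennreal (f x) \<partial>M) = ennreal \<alpha> * (\<integral>\<^sup>+x. ennreal (f x) \<partial>M)"
    by (rule nn_integral_cmult) (use fm in auto)
  have "(\<integral>\<^sup>+x. ennreal \<gamma> * (1 + ennreal (g x)) \<partial>M) = ennreal \<gamma> * (\<integral>\<^sup>+x. 1 + ennreal (g x) \<partial>M)"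
    by (rule nn_integral_cmult) (use gm in auto)
  also have "\<dots> = ennreal \<gamma> * (1 + (\<integral>\<^sup>+x. ennreal (g x) \<partial>M))"
    using nn_integral_add[of "\<lambda>_. 1" M "\<lambda>x. ennreal (g x)"] gm by (simp add: emeasure_space_1)
  also have "\<dots> \<le> ennreal \<gamma> * (1 + ennreal B)"
    by (intro mult_left_mono add_left_mono g(3)) auto
  also have "\<dots> = ennreal (\<gamma> * (1 + B))"
    using coeffs by (simp add: ennreal_mult ennreal_plus)
  finally have second: "(\<integral>\<^sup>+x. ennreal \<gamma> * (1 + ennreal (g x)) \<partial>M) \<le> ennreal (\<gamma> * (1 + B))" .
  show ?thesis unfolding split first using second by (rule add_left_mono)
qed

lemma nn_integral_norm_add_power4_le:
  fixes B :: "'a \<Rightarrow> 'v::euclidean_space" and x :: 'v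
  assumes B: "B \<in> borel_measurable M"
    and mean_zero: "integrable M (\<lambda>\<omega>. inner x (B \<omega>))" "(\<integral>\<omega>. inner x (B \<omega>) \<partial>M) = 0"
    and moment2: "(\<integral>\<^sup>+\<omega>. ennreal (norm (B \<omega>)^2) \<partial>M) \<le> ennreal q2"
    and moment4: "(\<integral>\<^sup>+\<omega>. ennreal (norm (B \<omega>)^4) \<partial>M) \<le> ennreal q4"
    and q: "0 \<le> q2" "0 \<le> q4"
  shows "(\<integral>\<^sup>+\<omega>. ennreal (norm (x + B \<omega>)^4) \<partial>M) \<le> ennreal (norm x^4 + 8 * norm x^2 * q2 + 3 * q4)"
proof -
  have integrable_moment: "integrable M (\<lambda>\<omega>. norm (B \<omega>)^n)" "(\<integral>\<omega>. norm (B \<omega>)^n \<partial>M) \<le> q"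
    if bound: "(\<integral>\<^sup>+\<omega>. ennreal (norm (B \<omega>)^n) \<partial>M) \<le> ennreal q" and "0 \<le> q" for n q
  proof -
    show int: "integrable M (\<lambda>\<omega>. norm (B \<omega>)^n)"
      by (rule integrableI_nonneg) (use B bound in \<open>auto intro: le_less_trans\<close>)
    have "ennreal (\<integral>\<omega>. norm (B \<omega>)^n \<partial>M) = (\<integral>\<^sup>+\<omega>. ennreal (norm (B \<omega>)^n) \<partial>M)"
      by (rule nn_integral_eq_integral[symmetric]) (use int in auto)
    with bound have "ennreal (\<integral>\<omega>. norm (B \<omega>)^n \<partial>M) \<le> ennreal q" by simp
    then show "(\<integral>\<omega>. norm (B \<omega>)^n \<partial>M) \<le> q"
      using ennreal_le_iff[OF \<open>0 \<le> q\<close>] by blast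
  qed
  note m2 = integrable_moment[OF moment2 q(1)] and m4 = integrable_moment[OF moment4 q(2)]
  define f where "f \<omega> = norm x^4 + 4 * norm x^2 * inner x (B \<omega>) + 8 * norm x^2 * norm (B \<omega>)^2 + 3 * norm (B \<omega>)^4" for \<omega>
  have f_ge: "norm (x + B \<omega>)^4 \<le> f \<omega>" for \<omega>
    unfolding f_def by (rule norm_add_power4_le)
  have "(\<integral>\<^sup>+\<omega>. ennreal (norm (x + B \<omega>)^4) \<partial>M) \<le> (\<integral>\<^sup>+\<omega>. ennreal (f \<omega>) \<partial>M)"
    by (intro nn_integral_mono ennreal_leI f_ge)
  also have "\<dots> = ennreal (\<integral>\<omega>. f \<omega> \<partial>M)"
  proof (rule nn_integral_eq_integral)
    show "integrable M f" unfolding f_def using m2 m4 mean_zero by auto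
    show "AE \<omega> in M. 0 \<le> f \<omega>"
      using f_ge by (intro AE_I2) (meson norm_ge_zero order_trans zero_le_power)
  qed
  also have "\<dots> \<le> ennreal (norm x^4 + 8 * norm x^2 * q2 + 3 * q4)"
  proof (rule ennreal_leI)
    have "(\<integral>\<omega>. f \<omega> \<partial>M)
        = norm x^4 + 8 * norm x^2 * (\<integral>\<omega>. norm (B \<omega>)^2 \<partial>M) + 3 * (\<integral>\<omega>. norm (B \<omega>)^4 \<partial>M)"
      unfolding f_def using m2 m4 mean_zero by (simp add: prob_space)
    then show "(\<integral>\<omega>. f \<omega> \<partial>M) \<le> norm x^4 + 8 * norm x^2 * q2 + 3 * q4"
      using m2 m4 by (simp add: add_mono mult_left_mono)
  qed
  finally show ?thesis .
qed

lemma distr_Pair_eq_pair_measure: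
  assumes indep: "indep_set A B"
    and X: "X \<in> measurable M S" and Y: "Y \<in> measurable M T"
    and XA: "\<And>C. C \<in> sets S \<Longrightarrow> X -` C \<inter> space M \<in> A"
    and YB: "\<And>D. D \<in> sets T \<Longrightarrow> Y -` D \<inter> space M \<in> B"
  shows "distr M (S \<Otimes>\<^sub>M T) (\<lambda>\<omega>. (X \<omega>, Y \<omega>)) = distr M S X \<Otimes>\<^sub>M distr M T Y"
proof -
  interpret PX: prob_space "distr M S X" by (rule prob_space_distr) fact
  interpret PY: prob_space "distr M T Y" by (rule prob_space_distr) fact
  interpret XY: pair_prob_space "distr M S X" "distr M T Y" ..
  have XY: "(\<lambda>\<omega>. (X \<omega>, Y \<omega>)) \<in> measurable M (S \<Otimes>\<^sub>M T)" using X Y by (rule measurable_Pair)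
  have "distr M S X \<Otimes>\<^sub>M distr M T Y = distr M (S \<Otimes>\<^sub>M T) (\<lambda>\<omega>. (X \<omega>, Y \<omega>))"
  proof (rule pair_measure_eqI)
    show "sigma_finite_measure (distr M S X)" "sigma_finite_measure (distr M T Y)" ..
    show "sets (distr M S X \<Otimes>\<^sub>M distr M T Y) = sets (distr M (S \<Otimes>\<^sub>M T) (\<lambda>\<omega>. (X \<omega>, Y \<omega>)))"
      by simp
    fix C D assume "C \<in> sets (distr M S X)" and "D \<in> sets (distr M T Y)"
    then have C: "C \<in> sets S" and D: "D \<in> sets T" by auto
    have "emeasure (distr M (S \<Otimes>\<^sub>M T) (\<lambda>\<omega>. (X \<omega>, Y \<omega>))) (C \<times> D)
        = emeasure M ((\<lambda>\<omega>. (X \<omega>, Y \<omega>)) -` (C \<times> D) \<inter> space M)"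
      using C D by (intro emeasure_distr[OF XY]) auto
    also have "(\<lambda>\<omega>. (X \<omega>, Y \<omega>)) -` (C \<times> D) \<inter> space M = (X -` C \<inter> space M) \<inter> (Y -` D \<inter> space M)"
      by auto
    also have "emeasure M \<dots> = emeasure M (X -` C \<inter> space M) * emeasure M (Y -` D \<inter> space M)"
      using indep_setD[OF indep XA[OF C] YB[OF D]]
      by (simp add: emeasure_eq_measure measure_nonneg ennreal_mult)
    also have "\<dots> = emeasure (distr M S X) C * emeasure (distr M T Y) D"
      using X Y C D by (simp add: emeasure_distr)
    finally show "emeasure (distr M S X) C * emeasure (distr M T Y) D =
      emeasure (distr M (S \<Otimes>\<^sub>M T) (\<lambda>\<omega>. (X \<omega>, Y \<omega>))) (C \<times> D)" by simp
  qed
  then show ?thesis by simp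
qed

end

locale std_gaussian_vector = prob_space M for M :: "'w measure" +
  fixes Z :: "'w \<Rightarrow> real^'d"
  assumes Z_measurable: "Z \<in> borel_measurable M"
    and Z_std_gaussian: "std_gaussian_vec M Z"
begin

lemma component_measurable: "(\<lambda>\<omega>. Z \<omega> $ i) \<in> borel_measurable M"
  using measurable_compose[OF Z_measurable borel_measurable_nth[of i]] by simp

lemma component_distr: "distr M lborel (\<lambda>\<omega>. Z \<omega> $ i) = std_normal_distribution"
  using Z_std_gaussian unfolding std_gaussian_vec_def distributed_def by auto

lemma nn_integral_component_even_power:
  "(\<integral>\<^sup>+\<omega>. ennreal ((Z \<omega> $ i)^(2*j)) \<partial>M) = ennreal (fact (2*j) / (2^j * fact j))"
proof -
  have Zi: "(\<lambda>\<omega>. Z \<omega> $ i) \<in> measurable M lborel" using component_measurable by simp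
  have "(\<integral>\<^sup>+\<omega>. ennreal ((Z \<omega> $ i)^(2*j)) \<partial>M) = (\<integral>\<^sup>+x. ennreal (x^(2*j)) \<partial>distr M lborel (\<lambda>\<omega>. Z \<omega> $ i))"
    by (rule nn_integral_distr[OF Zi, symmetric]) simp
  also have "\<dots> = (\<integral>\<^sup>+x. ennreal (x^(2*j)) \<partial>std_normal_distribution)"
    by (simp add: component_distr)
  also have "\<dots> = ennreal (\<integral>x. x^(2*j) \<partial>std_normal_distribution)"
    by (rule nn_integral_eq_integral) (auto simp: std_normal_distribution_even_moments(2) zero_le_even_power)
  also have "\<dots> = ennreal (fact (2*j) / (2^j * fact j))"
    by (simp add: std_normal_distribution_even_moments(1))
  finally show ?thesis .
qed

lemma component_mean_zero:
  "integrable M (\<lambda>\<omega>. Z \<omega> $ i)" "(\<integral>\<omega>. Z \<omega> $ i \<partial>M) = 0"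
proof -
  have Zi: "(\<lambda>\<omega>. Z \<omega> $ i) \<in> measurable M lborel" using component_measurable by simp
  have "integrable std_normal_distribution (\<lambda>x. x)"
    using integrable_std_normal_distribution_moment[of 1] by simp
  then have "integrable (distr M lborel (\<lambda>\<omega>. Z \<omega> $ i)) (\<lambda>x. x)"
    by (simp add: component_distr)
  then show "integrable M (\<lambda>\<omega>. Z \<omega> $ i)"
    using integrable_distr_eq[OF Zi, of "\<lambda>x. x"] by simp
  have "(\<integral>\<omega>. Z \<omega> $ i \<partial>M) = (\<integral>x. x \<partial>distr M lborel (\<lambda>\<omega>. Z \<omega> $ i))"
    by (rule integral_distr[symmetric, OF Zi]) simp
  also have "\<dots> = (\<integral>x. x^1 \<partial>std_normal_distribution)"
    by (simp add: component_distr)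
  also have "\<dots> = 0" by (rule integral_std_normal_distribution_moment_odd) simp
  finally show "(\<integral>\<omega>. Z \<omega> $ i \<partial>M) = 0" .
qed

lemma inner_mean_zero:
  "integrable M (\<lambda>\<omega>. inner v (Z \<omega>))" "(\<integral>\<omega>. inner v (Z \<omega>) \<partial>M) = 0"
  unfolding inner_vec_def using component_mean_zero by auto

lemma nn_integral_norm_power2: "(\<integral>\<^sup>+\<omega>. ennreal (norm (Z \<omega>)^2) \<partial>M) = ennreal CARD('d)"
proof -
  have "(\<integral>\<^sup>+\<omega>. ennreal (norm (Z \<omega>)^2) \<partial>M) = (\<integral>\<^sup>+\<omega>. (\<Sum>i\<in>UNIV. ennreal ((Z \<omega> $ i)^(2*1))) \<partial>M)"
    by (simp add: norm_vec_def L2_set_def sum_nonneg sum_ennreal)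
  also have "\<dots> = (\<Sum>i\<in>UNIV. (\<integral>\<^sup>+\<omega>. ennreal ((Z \<omega> $ i)^(2*1)) \<partial>M))"
    by (rule nn_integral_sum) (use component_measurable in auto)
  also have "\<dots> = ennreal CARD('d)"
    by (simp only: nn_integral_component_even_power) (simp add: ennreal_of_nat_eq_real_of_nat)
  finally show ?thesis .
qed

lemma nn_integral_norm_power4_le: "(\<integral>\<^sup>+\<omega>. ennreal (norm (Z \<omega>)^4) \<partial>M) \<le> ennreal (3 * CARD('d)^2)"
proof -
  have power4_le: "norm (z::real^'d)^4 \<le> CARD('d) * (\<Sum>i\<in>UNIV. (z $ i)^(2*2))" for z
  proof -
    have "norm z^2 = (\<Sum>i\<in>UNIV. (z $ i)^2)"
      by (simp add: norm_vec_def L2_set_def sum_nonneg)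
    then have "norm z^4 = (\<Sum>i\<in>UNIV. (z $ i)^2)^2"
      by (metis power_mult numeral_Bit0 mult_2_right)
    also have "\<dots> \<le> (\<Sum>i\<in>UNIV. ((z $ i)^2)^2) * CARD('d)" by (rule sum_squared_le_sum_of_squares)
    finally show ?thesis by (simp add: mult.commute flip: power_mult)
  qed
  have "(\<integral>\<^sup>+\<omega>. ennreal (norm (Z \<omega>)^4) \<partial>M)
      \<le> (\<integral>\<^sup>+\<omega>. ennreal CARD('d) * (\<Sum>i\<in>UNIV. ennreal ((Z \<omega> $ i)^(2*2))) \<partial>M)"
    using power4_le by (intro nn_integral_mono) (simp add: sum_ennreal ennreal_mult[symmetric] sum_nonneg)
  also have "\<dots> = ennreal CARD('d) * (\<Sum>i\<in>UNIV. (\<integral>\<^sup>+\<omega>. ennreal ((Z \<omega> $ i)^(2*2)) \<partial>M))"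
  proof -
    have m: "(\<lambda>\<omega>. ennreal ((Z \<omega> $ i)^(2*2))) \<in> borel_measurable M" for i
      using component_measurable[of i] by measurable
    have "(\<integral>\<^sup>+\<omega>. (\<Sum>i\<in>UNIV. ennreal ((Z \<omega> $ i)^(2*2))) \<partial>M) = (\<Sum>i\<in>UNIV. (\<integral>\<^sup>+\<omega>. ennreal ((Z \<omega> $ i)^(2*2)) \<partial>M))"
      by (rule nn_integral_sum) (use m in auto)
    moreover have "(\<integral>\<^sup>+\<omega>. ennreal CARD('d) * (\<Sum>i\<in>UNIV. ennreal ((Z \<omega> $ i)^(2*2))) \<partial>M)
       = ennreal CARD('d) * (\<integral>\<^sup>+\<omega>. (\<Sum>i\<in>UNIV. ennreal ((Z \<omega> $ i)^(2*2))) \<partial>M)"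
      by (rule nn_integral_cmult) (use m in auto)
    ultimately show ?thesis by simp
  qed
  also have "\<dots> = ennreal CARD('d) * (\<Sum>i\<in>(UNIV::'d set). ennreal 3)"
    by (simp only: nn_integral_component_even_power) (simp add: fact_numeral)
  also have "\<dots> = ennreal (3 * CARD('d)^2)"
  proof -
    have "(\<Sum>i\<in>(UNIV::'d set). ennreal 3) = ennreal (real CARD('d) * 3)"
      by (subst sum_ennreal) auto
    then show ?thesis by (simp add: ennreal_mult[symmetric] mult_ac power2_eq_square)
  qed
  finally show ?thesis .
qed

lemma nn_integral_norm_add_scaleR_power4_le:
  "(\<integral>\<^sup>+z. ennreal (norm (x + c *\<^sub>R z)^4) \<partial>distr M borel Z)
    \<le> ennreal (norm x^4 + 8 * c^2 * CARD('d) * norm x^2 + 9 * c^4 * CARD('d)^2)"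
proof -
  have cZ: "(\<lambda>\<omega>. c *\<^sub>R Z \<omega>) \<in> borel_measurable M" using Z_measurable by measurable
  have "(\<integral>\<^sup>+z. ennreal (norm (x + c *\<^sub>R z)^4) \<partial>distr M borel Z) = (\<integral>\<^sup>+\<omega>. ennreal (norm (x + c *\<^sub>R Z \<omega>)^4) \<partial>M)"
    by (rule nn_integral_distr[OF Z_measurable]) simp
  also have "\<dots> \<le> ennreal (norm x^4 + 8 * norm x^2 * (c^2 * CARD('d)) + 3 * (c^4 * (3 * CARD('d)^2)))"
  proof (rule nn_integral_norm_add_power4_le[OF cZ])
    show "integrable M (\<lambda>\<omega>. inner x (c *\<^sub>R Z \<omega>))" "(\<integral>\<omega>. inner x (c *\<^sub>R Z \<omega>) \<partial>M) = 0"
      using inner_mean_zero[of "c *\<^sub>R x"] by simp_all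
    show "(\<integral>\<^sup>+\<omega>. ennreal (norm (c *\<^sub>R Z \<omega>)^2) \<partial>M) \<le> ennreal (c^2 * CARD('d))"
      by (subst nn_integral_norm_scaleR_power[OF Z_measurable]) (simp add: nn_integral_norm_power2 ennreal_mult)
    have "ennreal (\<bar>c\<bar>^4) * (\<integral>\<^sup>+\<omega>. ennreal (norm (Z \<omega>)^4) \<partial>M) \<le> ennreal (c^4) * ennreal (3 * CARD('d)^2)"
      by (intro mult_mono nn_integral_norm_power4_le) (auto simp: power_even_abs_numeral)
    then show "(\<integral>\<^sup>+\<omega>. ennreal (norm (c *\<^sub>R Z \<omega>)^4) \<partial>M) \<le> ennreal (c^4 * (3 * CARD('d)^2))"
      by (subst nn_integral_norm_scaleR_power[OF Z_measurable]) (simp add: ennreal_mult)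
  qed auto
  also have "\<dots> = ennreal (norm x^4 + 8 * c^2 * CARD('d) * norm x^2 + 9 * c^4 * CARD('d)^2)"
    by (simp add: algebra_simps)
  finally show ?thesis .
qed

end

lemma drift_step_contraction:
  fixes a :: "'a::real_inner \<Rightarrow> 'a"
  assumes lip: "\<And>x y. norm (a x - a y) \<le> L * norm (x - y)"
    and mono: "\<And>x y. inner (x - y) (a x - a y) \<le> - K * (norm (x - y))\<^sup>2"
    and h: "0 \<le> h" "h * L^2 \<le> K"
  shows "norm ((x - y) + h *\<^sub>R (a x - a y))^2 \<le> (1 - K*h) * norm (x - y)^2"
proof -
  define d where "d = x - y"
  define D where "D = a x - a y"
  have "norm D^2 \<le> (L * norm d)^2"
    unfolding d_def D_def using lip by (intro power_mono) auto
  then have D: "norm D^2 \<le> L^2 * norm d^2" by (simp add: power_mult_distrib)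
  have "norm (d + h *\<^sub>R D)^2 = norm d^2 + 2*h*inner d D + h^2 * norm D^2"
    unfolding power2_norm_eq_inner by (simp add: inner_add inner_commute power2_eq_square algebra_simps)
  also have "\<dots> \<le> norm d^2 + 2*h*(-K * norm d^2) + h^2 * (L^2 * norm d^2)"
    using mono[of x y] D h unfolding d_def D_def by (intro add_mono mult_left_mono) auto
  also have "\<dots> = norm d^2 * (1 - 2*K*h + h * (h*L^2))" by (simp add: algebra_simps power2_eq_square)
  also have "\<dots> \<le> norm d^2 * (1 - K*h)"
    using h mult_left_mono[OF h(2) h(1)] by (intro mult_left_mono) (auto simp: algebra_simps)
  finally show ?thesis unfolding d_def D_def by (simp add: mult.commute)
qed

lemma drift_step_norm_le:
  fixes a :: "'a::real_inner \<Rightarrow> 'a"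
  assumes lip: "\<And>x y. norm (a x - a y) \<le> L * norm (x - y)"
    and mono: "\<And>x y. inner (x - y) (a x - a y) \<le> - K * (norm (x - y))\<^sup>2"
    and K: "0 < K" and h: "0 \<le> h" "h \<le> 1" "4 * h * L^2 \<le> K"
  shows "norm (y + h *\<^sub>R a y)^2 \<le> (1 - K*h) * norm y^2 + (4 * norm (a 0)^2 / K + 2 * norm (a 0)^2) * h"
proof -
  define p where "p = norm y^2"
  define \<alpha> where "\<alpha> = norm (a 0)"
  have inner_le: "inner y (a y) \<le> -K * p + norm y * \<alpha>"
  proof -
    have "inner y (a y) = inner (y - 0) (a y - a 0) + inner y (a 0)" by (simp add: inner_diff_right)
    also have "\<dots> \<le> -K * p + norm y * \<alpha>"
      using mono[of y 0] norm_cauchy_schwarz[of y "a 0"] unfolding p_def \<alpha>_def by simp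
    finally show ?thesis .
  qed
  have norm_le: "norm (a y)^2 \<le> 2*L^2*p + 2*\<alpha>^2"
  proof -
    have "norm (a y) \<le> L * norm y + \<alpha>"
      using lip[of y 0] norm_triangle_ineq2[of "a y" "a 0"] unfolding \<alpha>_def by simp
    then have "norm (a y)^2 \<le> (L * norm y + \<alpha>)^2" by (intro power_mono) auto
    also have "\<dots> \<le> 2 * ((L * norm y)^2 + \<alpha>^2)"
      using zero_le_power2[of "L * norm y - \<alpha>"] by (simp add: power2_eq_square algebra_simps)
    finally have "norm (a y)^2 \<le> 2 * ((L * norm y)^2 + \<alpha>^2)" .
    then show ?thesis unfolding p_def by (simp add: power_mult_distrib algebra_simps)
  qed
  have young: "norm y * (2*\<alpha>) \<le> K/4 * p + 4*\<alpha>^2/K"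
    using mult_le_weighted_sum_squares[of "K/2" "norm y" "2*\<alpha>"] K unfolding p_def
    by (simp add: power2_eq_square)
  have "norm (y + h *\<^sub>R a y)^2 = p + 2*h*inner y (a y) + h^2 * norm (a y)^2"
    unfolding p_def power2_norm_eq_inner by (simp add: inner_add inner_commute power2_eq_square algebra_simps)
  also have "\<dots> \<le> p + 2*h*(-K * p + norm y * \<alpha>) + h^2 * (2*L^2*p + 2*\<alpha>^2)"
    using inner_le norm_le h by (intro add_mono mult_left_mono) auto
  also have "\<dots> = p - 2*K*h*p + h*(norm y * (2*\<alpha>)) + h * ((2*h*L^2)*p) + h^2*(2*\<alpha>^2)"
    by (simp add: algebra_simps power2_eq_square)
  also have "\<dots> \<le> p - 2*K*h*p + h*(K/4 * p + 4*\<alpha>^2/K) + h * (K/2 * p) + h*(2*\<alpha>^2)"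
  proof -
    have "h * ((2*h*L^2)*p) \<le> h * (K/2 * p)"
      using h unfolding p_def by (intro mult_left_mono mult_right_mono) auto
    moreover have "h^2*(2*\<alpha>^2) \<le> h*(2*\<alpha>^2)"
      using h power_decreasing[of 1 2 h] by (intro mult_right_mono) auto
    moreover have "h*(norm y * (2*\<alpha>)) \<le> h*(K/4 * p + 4*\<alpha>^2/K)"
      using young h by (intro mult_left_mono) auto
    ultimately show ?thesis by linarith
  qed
  also have "\<dots> \<le> (1 - K*h) * p + (4 * \<alpha>^2 / K + 2 * \<alpha>^2) * h"
  proof -
    have "0 \<le> K*h*p" using K h unfolding p_def by simp
    then show ?thesis by (simp add: algebra_simps)
  qed
  finally show ?thesis unfolding p_def \<alpha>_def .
qed

lemma coupled_moment_arith:
  fixes t2 n2 p1 p2 \<sigma> \<tau> h K :: real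
  assumes K: "0 < K" and h: "0 < h" "h * K \<le> 1" "h \<le> 1"
    and n: "0 \<le> n2" "n2 \<le> (1 - K*h) * t2" and t: "0 \<le> t2"
    and st: "0 \<le> \<sigma>" "0 \<le> \<tau>" and p: "0 \<le> p1" "0 \<le> p2"
  shows "n2^2 + 8*n2*(2*(h^2*(\<sigma>*(1+p1)) + h^2*(\<sigma>*(1+p2)))) + 3*(8*(h^4*(\<tau>*(1+p1^2)) + h^4*(\<tau>*(1+p2^2))))
    \<le> (1 - K*h/2) * t2^2 + (1536*\<sigma>^2/K + 48*\<tau>)*h^3*(1 + p1^2 + p2^2)"
proof -
  have kh: "0 \<le> 1 - K*h" "1 - K*h \<le> 1" using h K by (auto simp: mult.commute)
  have a: "n2^2 \<le> (1 - K*h) * t2^2"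
  proof -
    have "n2^2 \<le> ((1 - K*h) * t2)^2" using n by (intro power_mono) auto
    also have "\<dots> = (1-K*h)^2 * t2^2" by (simp add: power_mult_distrib)
    also have "\<dots> \<le> (1 - K*h) * t2^2"
      using kh by (intro mult_right_mono) (auto simp: power2_eq_square intro: mult_left_le_one_le)
    finally show ?thesis .
  qed
  define Q where "Q = 2*(h^2*(\<sigma>*(1+p1)) + h^2*(\<sigma>*(1+p2)))"
  have Q0: "0 \<le> Q" unfolding Q_def using st p by auto
  have nt: "n2 \<le> t2" using n kh t by (meson mult_left_le_one_le order_trans)
  have b: "8*n2*Q \<le> K*h/2 * t2^2 + 32*Q^2/(K*h)"
  proof -
    have "8*n2*Q \<le> 8*t2*Q" using nt Q0 by (simp add: mult_right_mono)
    also have "8*t2*Q = t2 * (8*Q)" by simp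
    also have "\<dots> \<le> (K*h)/2 * t2^2 + (8*Q)^2/(2*(K*h))" by (rule mult_le_weighted_sum_squares) (use K h in simp)
    also have "(8*Q)^2/(2*(K*h)) = 32*Q^2/(K*h)" by (simp add: power2_eq_square)
    finally show ?thesis by simp
  qed
  have S: "(2 + p1 + p2)^2 \<le> 12 * (1 + p1^2 + p2^2)"
  proof -
    have "0 \<le> (p1-p2)^2 + (p1-2)^2 + (p2-2)^2" by simp
    then have "(2 + p1 + p2)^2 \<le> 3*(4+p1^2+p2^2)" by (simp add: power2_eq_square algebra_simps)
    moreover have "3*(4+p1^2+p2^2) \<le> 12 * (1 + p1^2 + p2^2)" by simp
    ultimately show ?thesis by linarith
  qed
  have c: "32*Q^2/(K*h) \<le> 1536*\<sigma>^2/K*h^3*(1 + p1^2 + p2^2)"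
  proof -
    have "Q = 2*h^2*\<sigma>*(2+p1+p2)" unfolding Q_def by (simp add: algebra_simps)
    then have "32*Q^2/(K*h) = 128*\<sigma>^2/K*h^3*(2+p1+p2)^2"
      using K h by (simp add: power2_eq_square power3_eq_cube divide_simps)
    also have "\<dots> \<le> 128*\<sigma>^2/K*h^3*(12 * (1 + p1^2 + p2^2))"
      by (rule mult_left_mono[OF S]) (use K h in simp)
    also have "\<dots> = 1536*\<sigma>^2/K*h^3*(1 + p1^2 + p2^2)" by simp
    finally show ?thesis .
  qed
  have d: "3*(8*(h^4*(\<tau>*(1+p1^2)) + h^4*(\<tau>*(1+p2^2)))) \<le> 48*\<tau>*h^3*(1 + p1^2 + p2^2)"
  proof -
    have "h^4 \<le> h^3" using h by (simp add: power_decreasing)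
    have "3*(8*(h^4*(\<tau>*(1+p1^2)) + h^4*(\<tau>*(1+p2^2)))) = 24*\<tau>*h^4*(2 + p1^2 + p2^2)" by (simp add: algebra_simps)
    also have "\<dots> \<le> 24*\<tau>*h^3*(2*(1 + p1^2 + p2^2))"
      using \<open>h^4 \<le> h^3\<close> st h by (intro mult_mono) (auto intro: mult_left_mono)
    also have "\<dots> = 48*\<tau>*h^3*(1 + p1^2 + p2^2)" by simp
    finally show ?thesis .
  qed
  show ?thesis using a b c d unfolding Q_def by (simp add: algebra_simps)
qed

lemma quadratic_absorb:
  fixes p h K \<alpha>0 \<alpha>1 \<gamma> :: real
  assumes K: "0 < K" and h: "0 \<le> h" "h \<le> 1" "8*\<gamma>*h \<le> K" and \<gamma>: "0 \<le> \<gamma>" and p: "0 \<le> p"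
  shows "(1-K*h)*p^2 + h*\<alpha>1*p + \<alpha>0*h + h^2*\<gamma>*(1+p)^2 \<le> (1 - K*h/2) * p^2 + (\<alpha>1^2/K + \<alpha>0 + 2*\<gamma>) * h"
proof -
  have g: "h^2*\<gamma>*(1+p)^2 \<le> K/4*h*p^2 + 2*\<gamma>*h"
  proof -
    have "0 \<le> (p - 1)^2" by simp
    then have "(1+p)^2 \<le> 2 + 2*p^2" by (simp add: power2_eq_square algebra_simps)
    then have "h^2*\<gamma>*(1+p)^2 \<le> h^2*\<gamma>*(2 + 2*p^2)" using \<gamma> by (intro mult_left_mono) auto
    also have "\<dots> = 2*\<gamma>*h^2 + (2*\<gamma>*h)*h*p^2" by (simp add: algebra_simps power2_eq_square)
    also have "(2*\<gamma>*h)*h*p^2 \<le> (K/4)*h*p^2"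
    proof -
      have "2*\<gamma>*h \<le> K/4" using h(3) by simp
      then have "(2*\<gamma>*h)*(h*p^2) \<le> (K/4)*(h*p^2)" using h p by (intro mult_right_mono) auto
      then show ?thesis by (simp add: mult.assoc)
    qed
    also have "2*\<gamma>*h^2 \<le> 2*\<gamma>*h" using h power_decreasing[of 1 2 h] \<gamma> by (simp add: mult_left_mono)
    finally show ?thesis by simp
  qed
  have lin: "h*\<alpha>1*p \<le> K/4*h*p^2 + \<alpha>1^2/K*h"
  proof -
    have "p * \<alpha>1 \<le> (K/2)/2 * p^2 + \<alpha>1^2/(2*(K/2))" by (rule mult_le_weighted_sum_squares) (use K in simp)
    then have "h*(p*\<alpha>1) \<le> h*((K/2)/2 * p^2 + \<alpha>1^2/(2*(K/2)))" using h by (simp add: mult_left_mono)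
    then show ?thesis by (simp add: algebra_simps)
  qed
  have "(1 - K*h/2) * p^2 = (1-K*h)*p^2 + K/4*h*p^2 + K/4*h*p^2" by (simp add: algebra_simps)
  moreover have "(\<alpha>1^2/K + \<alpha>0 + 2*\<gamma>) * h = \<alpha>1^2/K*h + \<alpha>0*h + 2*\<gamma>*h" by (simp add: algebra_simps)
  ultimately show ?thesis using g lin by linarith
qed

lemma chain_moment_arith:
  fixes p n2 \<sigma> \<tau> \<beta>2 dd h K c0 :: real
  defines "\<gamma> \<equiv> 8*\<sigma>*(1+c0) + 3*\<tau>"
  defines "\<alpha>1 \<equiv> 2*c0 + 16*\<beta>2*dd + 16*\<beta>2*dd*\<sigma>"
  defines "\<alpha>0 \<equiv> c0^2 + 16*\<beta>2*dd*c0 + 16*\<beta>2*dd*\<sigma> + 9*\<beta>2^2*dd^2"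
  assumes K: "0 < K" and h: "0 < h" "h * K \<le> 1" "h \<le> 1" "8*\<gamma>*h \<le> K"
    and n: "0 \<le> n2" "n2 \<le> (1 - K*h) * p + c0*h" and p: "0 \<le> p" and c0: "0 \<le> c0"
    and st: "0 \<le> \<sigma>" "0 \<le> \<tau>" "0 \<le> \<beta>2" "0 \<le> dd"
  shows "n2^2 + 8*n2*(h^2*(\<sigma>*(1+p))) + 3*(h^4*(\<tau>*(1+p^2))) + 8*(\<beta>2*h*dd)*(2*n2 + 2*(h^2*(\<sigma>*(1+p))))
     + 9*(\<beta>2^2*h^2*dd^2)
    \<le> (1 - K*h/2) * p^2 + (\<alpha>1^2/K + \<alpha>0 + 2*\<gamma>) * h"
proof -
  have kh: "0 \<le> 1 - K*h" "1 - K*h \<le> 1" using h K by (auto simp: mult.commute)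
  have h2: "h^2 \<le> h" "h^3 \<le> h" "h^4 \<le> h^2"
    using power_decreasing[of 1 2 h] power_decreasing[of 1 3 h] power_decreasing[of 2 4 h] h by auto
  have np: "n2 \<le> p + c0"
  proof -
    have "(1 - K*h) * p \<le> p" using kh p by (simp add: mult_left_le_one_le)
    moreover have "c0 * h \<le> c0" using c0 h mult_right_le_one_le[of c0 h] by simp
    ultimately show ?thesis using n by linarith
  qed
  have t1: "n2^2 \<le> (1-K*h)*p^2 + 2*c0*h*p + c0^2*h"
  proof -
    have "n2^2 \<le> ((1 - K*h) * p + c0*h)^2" using n by (intro power_mono) auto
    also have "\<dots> = (1-K*h)^2*p^2 + 2*(1-K*h)*c0*h*p + c0^2*h^2" by (simp add: power2_eq_square algebra_simps)
    also have "\<dots> \<le> (1-K*h)*p^2 + 2*c0*h*p + c0^2*h"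
    proof -
      have "(1-K*h)^2*p^2 \<le> (1-K*h)*p^2"
        using kh by (intro mult_right_mono) (auto simp: power2_eq_square intro: mult_left_le_one_le)
      moreover have "2*(1-K*h)*c0*h*p \<le> 2*c0*h*p"
        using kh c0 h p by (simp add: mult_left_le_one_le mult_right_mono)
      moreover have "c0^2*h^2 \<le> c0^2*h" using h2 by (simp add: mult_left_mono)
      ultimately show ?thesis by linarith
    qed
    finally show ?thesis .
  qed
  have t2: "8*n2*(h^2*(\<sigma>*(1+p))) \<le> h^2 * (8*\<sigma>*(1+c0)) * (1+p)^2"
  proof -
    have "8*n2*(h^2*(\<sigma>*(1+p))) \<le> 8*(p+c0)*(h^2*(\<sigma>*(1+p)))"
      using np st p h by (intro mult_right_mono mult_left_mono) auto
    also have "(p + c0) \<le> (1+c0)*(1+p)" using p c0 by (simp add: algebra_simps)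
    then have "8*(p+c0)*(h^2*(\<sigma>*(1+p))) \<le> 8*((1+c0)*(1+p))*(h^2*(\<sigma>*(1+p)))"
      using st p by (intro mult_right_mono mult_left_mono) auto
    also have "\<dots> = h^2 * (8*\<sigma>*(1+c0)) * (1+p)^2" by (simp add: power2_eq_square algebra_simps)
    finally show ?thesis .
  qed
  have t3: "3*(h^4*(\<tau>*(1+p^2))) \<le> h^2 * (3*\<tau>) * (1+p)^2"
  proof -
    have "3*(h^4*(\<tau>*(1+p^2))) \<le> 3*(h^2*(\<tau>*(1+p^2)))"
      using h2 st p by (intro mult_left_mono mult_right_mono) auto
    also have "\<dots> \<le> 3*(h^2*(\<tau>*(1+p)^2))"
      using st p by (intro mult_left_mono) (auto simp: power2_eq_square algebra_simps)
    finally show ?thesis by (simp add: algebra_simps)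
  qed
  have t4: "8*(\<beta>2*h*dd)*(2*n2) \<le> h*(16*\<beta>2*dd) * (p + c0)"
  proof -
    have "(h*(16*\<beta>2*dd)) * n2 \<le> (h*(16*\<beta>2*dd)) * (p + c0)"
      using np st h by (intro mult_left_mono) auto
    then show ?thesis by (simp add: algebra_simps)
  qed
  have t5: "8*(\<beta>2*h*dd)*(2*(h^2*(\<sigma>*(1+p)))) \<le> h*(16*\<beta>2*dd*\<sigma>)*(1+p)"
  proof -
    have "8*(\<beta>2*h*dd)*(2*(h^2*(\<sigma>*(1+p)))) = h^2 * (h*(16*\<beta>2*dd*\<sigma>)*(1+p))" by (simp add: algebra_simps power2_eq_square)
    also have "\<dots> \<le> 1 * (h*(16*\<beta>2*dd*\<sigma>)*(1+p))"
      using h2 h st p by (intro mult_right_mono) (auto simp: power_le_one)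
    finally show ?thesis by simp
  qed
  have t6: "9*(\<beta>2^2*h^2*dd^2) \<le> 9*\<beta>2^2*dd^2*h"
  proof -
    have "(9*\<beta>2^2*dd^2)*h^2 \<le> (9*\<beta>2^2*dd^2)*h" using h2 by (intro mult_left_mono) auto
    then show ?thesis by (simp add: algebra_simps)
  qed
  have "n2^2 + 8*n2*(h^2*(\<sigma>*(1+p))) + 3*(h^4*(\<tau>*(1+p^2))) + 8*(\<beta>2*h*dd)*(2*n2 + 2*(h^2*(\<sigma>*(1+p))))
     + 9*(\<beta>2^2*h^2*dd^2)
     \<le> (1-K*h)*p^2 + h*\<alpha>1*p + \<alpha>0*h + h^2*\<gamma>*(1+p)^2"
  proof -
    have e: "8*(\<beta>2*h*dd)*(2*n2 + 2*(h^2*(\<sigma>*(1+p)))) = 8*(\<beta>2*h*dd)*(2*n2) + 8*(\<beta>2*h*dd)*(2*(h^2*(\<sigma>*(1+p))))"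
      by (simp add: distrib_left)
    have e2: "(1-K*h)*p^2 + 2*c0*h*p + c0^2*h + h^2 * (8*\<sigma>*(1+c0)) * (1+p)^2 + h^2 * (3*\<tau>) * (1+p)^2
       + h*(16*\<beta>2*dd) * (p + c0) + h*(16*\<beta>2*dd*\<sigma>)*(1+p) + 9*\<beta>2^2*dd^2*h
       = (1-K*h)*p^2 + h*\<alpha>1*p + \<alpha>0*h + h^2*\<gamma>*(1+p)^2"
      unfolding \<alpha>1_def \<alpha>0_def \<gamma>_def by (simp add: algebra_simps)
    show ?thesis using t1 t2 t3 t4 t5 t6 e e2 by linarith
  qed
  also have "\<dots> \<le> (1 - K*h/2) * p^2 + (\<alpha>1^2/K + \<alpha>0 + 2*\<gamma>) * h"
    by (rule quadratic_absorb[OF K _ h(3) h(4) _ p]) (use h st c0 in \<open>simp_all add: \<gamma>_def\<close>)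
  finally show ?thesis .
qed

locale coupled_chains = prob_space M for M :: "'w measure" +
  fixes a :: "real^'d \<Rightarrow> real^'d"
    and b :: "real^'d \<Rightarrow> real^'n \<Rightarrow> real^'d"
    and \<mu> :: "nat \<Rightarrow> (real^'n) measure"
    and phiA phiB :: "nat \<Rightarrow> real^'n \<Rightarrow> real^'n"
    and X0 :: "'w \<Rightarrow> real^'d"
    and Z :: "nat \<Rightarrow> 'w \<Rightarrow> real^'d"
    and U :: "nat \<Rightarrow> nat \<Rightarrow> 'w \<Rightarrow> real^'n"
    and \<beta> L K \<kappa> :: real
  assumes b_meas: "case_prod b \<in> borel_measurable borel"
    and mu_prob: "\<And>s. s \<ge> 1 \<Longrightarrow> prob_space (\<mu> s)"
    and mu_sets: "\<And>s. s \<ge> 1 \<Longrightarrow> sets (\<mu> s) = sets borel"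
    and unbiased_int: "\<And>s x. s \<ge> 1 \<Longrightarrow> integrable (\<mu> s) (b x)"
    and unbiased: "\<And>s x. s \<ge> 1 \<Longrightarrow> (\<integral>u. b x u \<partial>\<mu> s) = a x"
    and A1_lip: "\<And>x y. norm (a x - a y) \<le> L * norm (x - y)"
    and A1_K: "K > 0"
    and A1_mono: "\<And>x y. inner (x - y) (a x - a y) \<le> - K * (norm (x - y))\<^sup>2"
    and A3: "\<And>s x. s \<ge> 1 \<Longrightarrow>
       (\<integral>\<^sup>+u. ennreal ((norm (b x u - a x))^2) \<partial>\<mu> s) \<le> ennreal (\<kappa> / real s * (1 + (norm x)^2))"
    and A4: "\<And>s x. s \<ge> 1 \<Longrightarrow>
       (\<integral>\<^sup>+u. ennreal ((norm (b x u - a x))^4) \<partial>\<mu> s) \<le> ennreal (\<kappa> / (real s)^2 * (1 + (norm x)^4))"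
    and A8_meas1: "\<And>s. s \<ge> 1 \<Longrightarrow> phiA s \<in> borel_measurable borel"
    and A8_meas2: "\<And>s. s \<ge> 1 \<Longrightarrow> phiB s \<in> borel_measurable borel"
    and A8_law1: "\<And>s. s \<ge> 1 \<Longrightarrow> distr (\<mu> (2 * s)) borel (phiA s) = \<mu> s"
    and A8_law2: "\<And>s. s \<ge> 1 \<Longrightarrow> distr (\<mu> (2 * s)) borel (phiB s) = \<mu> s"
    and X0_meas: "X0 \<in> borel_measurable M"
    and X0_mom: "(\<integral>\<^sup>+\<omega>. ennreal ((norm (X0 \<omega>))^4) \<partial>M) < \<infinity>"
    and Z_meas: "\<And>k. Z k \<in> borel_measurable M"
    and Z_gauss: "\<And>k. k \<ge> 1 \<Longrightarrow> std_gaussian_vec M (Z k)"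
    and U_meas: "\<And>s k. U s k \<in> borel_measurable M"
    and U_law: "\<And>s k. s \<ge> 1 \<Longrightarrow> distr M borel (U s k) = \<mu> (2 * s)"
    and indep: "\<And>s. s \<ge> 1 \<Longrightarrow> rv_indep M X0 Z (U s)"
begin

lemma b_measurable_comp:
  assumes "f \<in> borel_measurable N" "g \<in> borel_measurable N"
  shows "(\<lambda>\<omega>. b (f \<omega>) (g \<omega>)) \<in> borel_measurable N"
  using measurable_compose[OF measurable_Pair[OF assms], of "case_prod b"] b_meas
  by (simp add: borel_prod)

definition chain :: "nat \<Rightarrow> real \<Rightarrow> (real^'n \<Rightarrow> real^'n) \<Rightarrow> nat \<Rightarrow> 'w \<Rightarrow> real^'d" where
  "chain s h phi = fine_chain h \<beta> b X0 Z (\<lambda>k \<omega>. phi (U s k \<omega>))"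

lemma chain_measurable:
  assumes phi: "phi \<in> borel_measurable borel"
  shows "chain s h phi k \<in> borel_measurable M"
proof (induction k)
  case (Suc k)
  have "(\<lambda>\<omega>. phi (U s k \<omega>)) \<in> borel_measurable M"
    using measurable_compose[OF U_meas phi] by auto
  then show ?case
    using Suc b_measurable_comp[OF Suc] Z_meas unfolding chain_def by simp
qed (simp add: chain_def X0_meas)

subsection \<open>Independence of the past from the next innovations\<close>

definition generated_events :: "nat \<Rightarrow> rv_idx \<Rightarrow> 'w set set" where
  "generated_events s i = (case i of
              IX0 \<Rightarrow> sets (vimage_algebra (space M) X0 borel)
            | IZ k \<Rightarrow> sets (vimage_algebra (space M) (Z k) borel)
            | IU k \<Rightarrow> sets (vimage_algebra (space M) (U s k) borel))"

definition generated_sigma :: "nat \<Rightarrow> rv_idx set \<Rightarrow> 'w measure" where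
  "generated_sigma s I = sigma (space M) (\<Union>i\<in>I. generated_events s i)"

lemma generated_events_subset_sets: "generated_events s i \<subseteq> sets M"
  unfolding generated_events_def using X0_meas Z_meas U_meas
  by (auto split: rv_idx.splits simp: measurable_iff_sets)

lemma sets_generated_sigma: "sets (generated_sigma s I) = sigma_sets (space M) (\<Union>i\<in>I. generated_events s i)"
  unfolding generated_sigma_def using generated_events_subset_sets sets.sets_into_space
  by (intro sets_measure_of) blast

lemma space_generated_sigma[simp]: "space (generated_sigma s I) = space M"
  unfolding generated_sigma_def using generated_events_subset_sets sets.sets_into_space
  by (intro space_measure_of) blast

lemma subalgebra_generated_sigma: "subalgebra M (generated_sigma s I)"
  unfolding subalgebra_def sets_generated_sigma
  using generated_events_subset_sets by (auto intro!: sets.sigma_sets_subset)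

lemma measurable_generated_sigmaI:
  assumes "i \<in> I" "f \<in> space M \<rightarrow> space N" "sets (vimage_algebra (space M) f N) \<subseteq> generated_events s i"
  shows "f \<in> measurable (generated_sigma s I) N"
proof (rule measurable_from_subalg[OF _ measurable_vimage_algebra1[OF assms(2)]])
  show "subalgebra (generated_sigma s I) (vimage_algebra (space M) f N)"
    unfolding subalgebra_def sets_generated_sigma using assms by auto
qed

lemma X0_measurable_generated_sigma: "IX0 \<in> I \<Longrightarrow> X0 \<in> borel_measurable (generated_sigma s I)"
  by (rule measurable_generated_sigmaI) (auto simp: generated_events_def)

lemma Z_measurable_generated_sigma: "IZ k \<in> I \<Longrightarrow> Z k \<in> borel_measurable (generated_sigma s I)"
  by (rule measurable_generated_sigmaI) (auto simp: generated_events_def)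

lemma U_measurable_generated_sigma: "IU k \<in> I \<Longrightarrow> U s k \<in> borel_measurable (generated_sigma s I)"
  by (rule measurable_generated_sigmaI) (auto simp: generated_events_def)

lemma chain_measurable_generated_sigma:
  assumes phi: "phi \<in> borel_measurable borel"
    and I: "IX0 \<in> I" "\<And>j. 1 \<le> j \<Longrightarrow> j \<le> k \<Longrightarrow> IZ j \<in> I" "\<And>j. j < k \<Longrightarrow> IU j \<in> I"
  shows "chain s h phi k \<in> borel_measurable (generated_sigma s I)"
  using I
proof (induction k)
  case 0
  then show ?case by (simp add: chain_def X0_measurable_generated_sigma)
next
  case (Suc k)
  have Y: "chain s h phi k \<in> borel_measurable (generated_sigma s I)"
    using Suc by auto
  have V: "(\<lambda>\<omega>. phi (U s k \<omega>)) \<in> borel_measurable (generated_sigma s I)"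
    using measurable_compose[OF U_measurable_generated_sigma[of k I s] phi] Suc by auto
  have "Z (Suc k) \<in> borel_measurable (generated_sigma s I)"
    using Suc by (intro Z_measurable_generated_sigma) auto
  then show ?case
    using Y V b_measurable_comp[OF Y V] unfolding chain_def by simp
qed

lemma indep_set_generated_sigma:
  assumes s: "s \<ge> 1" and disj: "I0 \<inter> I1 = {}" and no_Z0: "IZ 0 \<notin> I0" "IZ 0 \<notin> I1"
  shows "indep_set (sets (generated_sigma s I0)) (sets (generated_sigma s I1))"
proof -
  have "indep_sets (generated_events s) {i. i \<noteq> IZ 0}"
    using indep[OF s] unfolding rv_indep_def generated_events_def[abs_def] by simp
  then have "indep_sets (generated_events s) (\<Union>j\<in>UNIV. case_bool I0 I1 j)"
    by (rule indep_sets_mono_index[rotated]) (use no_Z0 in \<open>auto split: bool.splits\<close>)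
  then have "indep_sets (\<lambda>j. sigma_sets (space M) (\<Union>i\<in>case_bool I0 I1 j. generated_events s i)) UNIV"
  proof (rule indep_sets_collect_sigma)
    show "Int_stable (generated_events s i)" for i
      unfolding generated_events_def by (auto split: rv_idx.splits intro: sets.Int_stable)
    show "disjoint_family_on (case_bool I0 I1) UNIV"
      using disj unfolding disjoint_family_on_def by (auto split: bool.splits)
  qed
  then show ?thesis
    unfolding indep_set_def sets_generated_sigma
    by (rule indep_sets_cong[THEN iffD1, rotated 2]) (auto split: bool.splits)
qed

lemma distr_Pair_generated_sigma:
  assumes s: "s \<ge> 1" and disj: "I0 \<inter> I1 = {}" and no_Z0: "IZ 0 \<notin> I0" "IZ 0 \<notin> I1"
    and X: "X \<in> measurable (generated_sigma s I0) S" and Y: "Y \<in> measurable (generated_sigma s I1) T"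
  shows "distr M (S \<Otimes>\<^sub>M T) (\<lambda>\<omega>. (X \<omega>, Y \<omega>)) = distr M S X \<Otimes>\<^sub>M distr M T Y"
proof (rule distr_Pair_eq_pair_measure[OF indep_set_generated_sigma[OF s disj no_Z0]])
  show "X \<in> measurable M S" by (rule measurable_from_subalg[OF subalgebra_generated_sigma X])
  show "Y \<in> measurable M T" by (rule measurable_from_subalg[OF subalgebra_generated_sigma Y])
  show "X -` C \<inter> space M \<in> sets (generated_sigma s I0)" if "C \<in> sets S" for C
    using measurable_sets[OF X that] by simp
  show "Y -` D \<inter> space M \<in> sets (generated_sigma s I1)" if "D \<in> sets T" for D
    using measurable_sets[OF Y that] by simp
qed

text \<open>The pair of chains at time k is a function of X0, Z 1, ..., Z k and U 0, ..., U (k-1),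
  hence independent of (U k, Z (k+1)), whose law is a product.\<close>

lemma nn_integral_chain_step_le:
  fixes F :: "((real^'d) \<times> (real^'d)) \<times> ((real^'n) \<times> (real^'d)) \<Rightarrow> ennreal"
  assumes s: "s \<ge> 1" and phi: "phi1 \<in> borel_measurable borel" "phi2 \<in> borel_measurable borel"
    and F: "F \<in> borel_measurable (borel \<Otimes>\<^sub>M (borel \<Otimes>\<^sub>M borel))"
    and g: "g \<in> borel_measurable borel"
    and step: "\<And>w. (\<integral>\<^sup>+u. (\<integral>\<^sup>+z. F (w, (u, z)) \<partial>distr M borel (Z (Suc k))) \<partial>\<mu> (2 * s)) \<le> g w"
  shows "(\<integral>\<^sup>+\<omega>. F ((chain s h phi1 k \<omega>, chain s h phi2 k \<omega>), (U s k \<omega>, Z (Suc k) \<omega>)) \<partial>M)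
    \<le> (\<integral>\<^sup>+\<omega>. g (chain s h phi1 k \<omega>, chain s h phi2 k \<omega>) \<partial>M)"
proof -
  define W where "W = (\<lambda>\<omega>. (chain s h phi1 k \<omega>, chain s h phi2 k \<omega>))"
  define V where "V = (\<lambda>\<omega>. (U s k \<omega>, Z (Suc k) \<omega>))"
  define I0 where "I0 = insert IX0 (IZ ` {1..k} \<union> IU ` {..<k})"
  define I1 where "I1 = {IU k, IZ (Suc k)}"
  let ?PZ = "distr M borel (Z (Suc k))"
  interpret PZ: prob_space ?PZ by (rule prob_space_distr) (rule Z_meas)
  interpret PU: prob_space "\<mu> (2 * s)" using mu_prob s by simp
  interpret PUZ: pair_prob_space "\<mu> (2 * s)" ?PZ ..
  have W: "W \<in> borel_measurable (generated_sigma s I0)"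
    unfolding W_def borel_prod[symmetric]
    by (intro measurable_Pair chain_measurable_generated_sigma phi) (auto simp: I0_def)
  have V: "V \<in> measurable (generated_sigma s I1) (borel \<Otimes>\<^sub>M borel)"
    unfolding V_def
    by (intro measurable_Pair U_measurable_generated_sigma Z_measurable_generated_sigma) (auto simp: I1_def)
  have distr_pair: "distr M (borel \<Otimes>\<^sub>M (borel \<Otimes>\<^sub>M borel)) (\<lambda>\<omega>. (W \<omega>, V \<omega>))
      = distr M borel W \<Otimes>\<^sub>M (\<mu> (2 * s) \<Otimes>\<^sub>M ?PZ)"
  proof -
    have "distr M (borel \<Otimes>\<^sub>M borel) V = distr M borel (U s k) \<Otimes>\<^sub>M ?PZ"
      unfolding V_def
      by (rule distr_Pair_generated_sigma[OF s, of "{IU k}" "{IZ (Suc k)}"])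
        (auto intro: U_measurable_generated_sigma Z_measurable_generated_sigma)
    moreover have "distr M (borel \<Otimes>\<^sub>M (borel \<Otimes>\<^sub>M borel)) (\<lambda>\<omega>. (W \<omega>, V \<omega>))
        = distr M borel W \<Otimes>\<^sub>M distr M (borel \<Otimes>\<^sub>M borel) V"
      by (rule distr_Pair_generated_sigma[OF s _ _ _ W V]) (auto simp: I0_def I1_def)
    ultimately show ?thesis using U_law[OF s] by simp
  qed
  have sets_U: "sets (\<mu> (2 * s)) = sets borel" using mu_sets s by simp
  have sets_UZ: "sets (\<mu> (2 * s) \<Otimes>\<^sub>M ?PZ) = sets (borel \<Otimes>\<^sub>M borel)"
    by (rule sets_pair_measure_cong[OF sets_U]) simp
  have sets_WUZ: "sets (distr M borel W \<Otimes>\<^sub>M (\<mu> (2 * s) \<Otimes>\<^sub>M ?PZ)) = sets (borel \<Otimes>\<^sub>M (borel \<Otimes>\<^sub>M borel))"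
    by (rule sets_pair_measure_cong[OF _ sets_UZ]) simp
  have WM: "W \<in> borel_measurable M" by (rule measurable_from_subalg[OF subalgebra_generated_sigma W])
  have WV: "(\<lambda>\<omega>. (W \<omega>, V \<omega>)) \<in> measurable M (borel \<Otimes>\<^sub>M (borel \<Otimes>\<^sub>M borel))"
    using WM measurable_from_subalg[OF subalgebra_generated_sigma V] by (rule measurable_Pair)
  have "(\<integral>\<^sup>+\<omega>. F (W \<omega>, V \<omega>) \<partial>M) = (\<integral>\<^sup>+p. F p \<partial>distr M (borel \<Otimes>\<^sub>M (borel \<Otimes>\<^sub>M borel)) (\<lambda>\<omega>. (W \<omega>, V \<omega>)))"
    by (rule nn_integral_distr[symmetric, OF WV]) (simp add: F)
  also have "\<dots> = (\<integral>\<^sup>+p. F p \<partial>(distr M borel W \<Otimes>\<^sub>M (\<mu> (2 * s) \<Otimes>\<^sub>M ?PZ)))"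
    by (simp only: distr_pair)
  also have "\<dots> = (\<integral>\<^sup>+w. (\<integral>\<^sup>+v. F (w, v) \<partial>(\<mu> (2 * s) \<Otimes>\<^sub>M ?PZ)) \<partial>distr M borel W)"
    by (rule PUZ.nn_integral_fst[symmetric]) (use F in \<open>simp add: measurable_cong_sets[OF sets_WUZ refl]\<close>)
  also have "\<dots> = (\<integral>\<^sup>+w. (\<integral>\<^sup>+u. (\<integral>\<^sup>+z. F (w, (u, z)) \<partial>?PZ) \<partial>\<mu> (2 * s)) \<partial>distr M borel W)"
  proof (rule nn_integral_cong)
    fix w
    have Fw: "(\<lambda>v. F (w, v)) \<in> borel_measurable (\<mu> (2 * s) \<Otimes>\<^sub>M ?PZ)"
      using measurable_Pair2[OF F, of w] by (simp add: measurable_cong_sets[OF sets_UZ refl])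
    show "(\<integral>\<^sup>+v. F (w, v) \<partial>(\<mu> (2 * s) \<Otimes>\<^sub>M ?PZ)) = (\<integral>\<^sup>+u. (\<integral>\<^sup>+z. F (w, (u, z)) \<partial>?PZ) \<partial>\<mu> (2 * s))"
      using PZ.nn_integral_fst[OF Fw] by simp
  qed
  also have "\<dots> \<le> (\<integral>\<^sup>+w. g w \<partial>distr M borel W)"
    by (intro nn_integral_mono step)
  also have "\<dots> = (\<integral>\<^sup>+\<omega>. g (W \<omega>) \<partial>M)"
    by (rule nn_integral_distr[OF WM]) (simp add: g)
  finally show ?thesis unfolding W_def V_def .
qed

lemma chain_0[simp]: "chain s h phi 0 \<omega> = X0 \<omega>"
  by (simp add: chain_def)

lemma chain_Suc: "chain s h phi (Suc k) \<omega> = chain s h phi k \<omega> + h *\<^sub>R b (chain s h phi k \<omega>) (phi (U s k \<omega>))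
    + (\<beta> * sqrt h) *\<^sub>R Z (Suc k) \<omega>"
  by (simp add: chain_def)

subsection \<open>Moments of the drift noise\<close>

definition kappa_pos :: real where "kappa_pos = max \<kappa> 0"

lemma kappa_pos_nonneg: "0 \<le> kappa_pos"
  unfolding kappa_pos_def by simp

definition halving_map :: "nat \<Rightarrow> (real^'n \<Rightarrow> real^'n) \<Rightarrow> bool" where
  "halving_map s phi \<longleftrightarrow> s \<ge> 1 \<and> phi \<in> borel_measurable borel \<and> distr (\<mu> (2 * s)) borel phi = \<mu> s"

lemma halving_map_phiA: "s \<ge> 1 \<Longrightarrow> halving_map s (phiA s)"
  unfolding halving_map_def using A8_meas1 A8_law1 by auto

lemma halving_map_phiB: "s \<ge> 1 \<Longrightarrow> halving_map s (phiB s)"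
  unfolding halving_map_def using A8_meas2 A8_law2 by auto

lemma halving_map_measurable:
  assumes "halving_map s phi"
  shows "phi \<in> measurable (\<mu> (2 * s)) borel"
  using assms mu_sets[of "2 * s"] measurable_cong_sets[of "\<mu> (2 * s)" borel borel borel]
  unfolding halving_map_def by auto

lemma drift_noise_measurable:
  assumes "halving_map s phi"
  shows "(\<lambda>u. h *\<^sub>R (b x (phi u) - a x)) \<in> borel_measurable (\<mu> (2 * s))"
  using b_measurable_comp[OF measurable_const halving_map_measurable[OF assms]] by measurable

lemma drift_noise_mean_zero:
  assumes phi: "halving_map s phi"
  shows "integrable (\<mu> (2 * s)) (\<lambda>u. h *\<^sub>R (b x (phi u) - a x))"
    "(\<integral>u. h *\<^sub>R (b x (phi u) - a x) \<partial>\<mu> (2 * s)) = 0"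
proof -
  have s: "s \<ge> 1" and law: "\<mu> s = distr (\<mu> (2 * s)) borel phi"
    using phi unfolding halving_map_def by auto
  interpret P: prob_space "\<mu> (2 * s)" using mu_prob s by simp
  have bx: "b x \<in> borel_measurable borel"
    using b_measurable_comp[OF measurable_const measurable_ident_sets[OF refl]] by simp
  have int: "integrable (\<mu> (2 * s)) (\<lambda>u. b x (phi u))"
    using integrable_distr_eq[OF halving_map_measurable[OF phi] bx] unbiased_int[OF s, of x] law by simp
  have "(\<integral>u. b x (phi u) \<partial>\<mu> (2 * s)) = a x"
    using integral_distr[OF halving_map_measurable[OF phi] bx] unbiased[OF s, of x] law by simp
  with int show "integrable (\<mu> (2 * s)) (\<lambda>u. h *\<^sub>R (b x (phi u) - a x))"
    "(\<integral>u. h *\<^sub>R (b x (phi u) - a x) \<partial>\<mu> (2 * s)) = 0"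
    by (simp_all add: P.prob_space)
qed

lemma drift_noise_moments_le:
  assumes phi: "halving_map s phi"
  shows "(\<integral>\<^sup>+u. ennreal (norm (h *\<^sub>R (b x (phi u) - a x))^2) \<partial>\<mu> (2 * s))
      \<le> ennreal (h^2 * (kappa_pos / real s * (1 + norm x^2)))"
    and "(\<integral>\<^sup>+u. ennreal (norm (h *\<^sub>R (b x (phi u) - a x))^4) \<partial>\<mu> (2 * s))
      \<le> ennreal (h^4 * (kappa_pos / (real s)^2 * (1 + norm x^4)))"
proof -
  have s: "s \<ge> 1" and law: "\<mu> s = distr (\<mu> (2 * s)) borel phi"
    using phi unfolding halving_map_def by auto
  have transfer: "(\<integral>\<^sup>+u. ennreal (norm (h *\<^sub>R (b x (phi u) - a x))^n) \<partial>\<mu> (2 * s))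
      = ennreal (\<bar>h\<bar>^n) * (\<integral>\<^sup>+v. ennreal (norm (b x v - a x)^n) \<partial>\<mu> s)" for n
  proof -
    have bx: "(\<lambda>v. ennreal (norm (b x v - a x)^n)) \<in> borel_measurable borel"
      using b_measurable_comp[OF measurable_const measurable_ident_sets[OF refl]] by measurable
    have "(\<integral>\<^sup>+v. ennreal (norm (b x v - a x)^n) \<partial>\<mu> s) = (\<integral>\<^sup>+u. ennreal (norm (b x (phi u) - a x)^n) \<partial>\<mu> (2 * s))"
      unfolding law by (rule nn_integral_distr[OF halving_map_measurable[OF phi]]) (simp add: bx)
    then show ?thesis
      using nn_integral_norm_scaleR_power[OF drift_noise_measurable[OF phi, of 1 x], of h n] by simp
  qed
  have "\<kappa> / real s * (1 + norm x^2) \<le> kappa_pos / real s * (1 + norm x^2)"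
    and "\<kappa> / (real s)^2 * (1 + norm x^4) \<le> kappa_pos / (real s)^2 * (1 + norm x^4)"
    by (auto intro!: mult_right_mono divide_right_mono simp: kappa_pos_def)
  with A3[OF s, of x] A4[OF s, of x]
  have b2: "(\<integral>\<^sup>+v. ennreal (norm (b x v - a x)^2) \<partial>\<mu> s) \<le> ennreal (kappa_pos / real s * (1 + norm x^2))"
    and b4: "(\<integral>\<^sup>+v. ennreal (norm (b x v - a x)^4) \<partial>\<mu> s) \<le> ennreal (kappa_pos / (real s)^2 * (1 + norm x^4))"
    by (auto intro: order_trans ennreal_leI)
  have "ennreal (\<bar>h\<bar>^2) * (\<integral>\<^sup>+v. ennreal (norm (b x v - a x)^2) \<partial>\<mu> s)
      \<le> ennreal (\<bar>h\<bar>^2) * ennreal (kappa_pos / real s * (1 + norm x^2))"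
    and "ennreal (\<bar>h\<bar>^4) * (\<integral>\<^sup>+v. ennreal (norm (b x v - a x)^4) \<partial>\<mu> s)
      \<le> ennreal (\<bar>h\<bar>^4) * ennreal (kappa_pos / (real s)^2 * (1 + norm x^4))"
    by (rule mult_left_mono[OF b2] mult_left_mono[OF b4]; simp)+
  then show "(\<integral>\<^sup>+u. ennreal (norm (h *\<^sub>R (b x (phi u) - a x))^2) \<partial>\<mu> (2 * s))
      \<le> ennreal (h^2 * (kappa_pos / real s * (1 + norm x^2)))"
    and "(\<integral>\<^sup>+u. ennreal (norm (h *\<^sub>R (b x (phi u) - a x))^4) \<partial>\<mu> (2 * s))
      \<le> ennreal (h^4 * (kappa_pos / (real s)^2 * (1 + norm x^4)))"
    unfolding transfer using kappa_pos_nonneg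
    by (simp_all add: ennreal_mult[symmetric] power_even_abs_numeral del: ennreal_mult)
qed

subsection \<open>One step of the coupled pair\<close>

definition coupled_noise :: "nat \<Rightarrow> real" where
  "coupled_noise s = 1536 * (kappa_pos / real s)^2 / K + 48 * (kappa_pos / (real s)^2)"

lemma coupled_step_moment4_le:
  assumes s: "s \<ge> 1" and h: "0 < h" "h*K \<le> 1" "h \<le> 1" "h * L^2 \<le> K"
  shows "(\<integral>\<^sup>+u. ennreal (norm ((y1 + h *\<^sub>R b y1 (phiB s u)) - (y2 + h *\<^sub>R b y2 (phiA s u)))^4) \<partial>\<mu> (2 * s))
    \<le> ennreal ((1 - K*h/2) * norm (y1 - y2)^4 + coupled_noise s * h^3 * (1 + norm y1^4 + norm y2^4))"
proof -
  interpret P: prob_space "\<mu> (2 * s)" using mu_prob s by simp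
  note A = halving_map_phiA[OF s] and B = halving_map_phiB[OF s]
  define \<sigma> where "\<sigma> = kappa_pos / real s"
  define \<tau> where "\<tau> = kappa_pos / (real s)^2"
  define \<xi>1 where "\<xi>1 u = h *\<^sub>R (b y1 (phiB s u) - a y1)" for u
  define \<xi>2 where "\<xi>2 u = h *\<^sub>R (b y2 (phiA s u) - a y2)" for u
  define x where "x = (y1 - y2) + h *\<^sub>R (a y1 - a y2)"
  have st: "0 \<le> \<sigma>" "0 \<le> \<tau>" unfolding \<sigma>_def \<tau>_def using kappa_pos_nonneg by auto
  have split: "(y1 + h *\<^sub>R b y1 (phiB s u)) - (y2 + h *\<^sub>R b y2 (phiA s u)) = x + (\<xi>1 u - \<xi>2 u)" for u
    unfolding x_def \<xi>1_def \<xi>2_def by (simp add: algebra_simps)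
  have m: "\<xi>1 \<in> borel_measurable (\<mu> (2 * s))" "\<xi>2 \<in> borel_measurable (\<mu> (2 * s))"
    unfolding \<xi>1_def[abs_def] \<xi>2_def[abs_def] using drift_noise_measurable[OF B] drift_noise_measurable[OF A] by auto
  have int: "integrable (\<mu> (2 * s)) (\<lambda>u. \<xi>1 u - \<xi>2 u)" "(\<integral>u. \<xi>1 u - \<xi>2 u \<partial>\<mu> (2 * s)) = 0"
    unfolding \<xi>1_def \<xi>2_def using drift_noise_mean_zero[OF A, of h y2] drift_noise_mean_zero[OF B, of h y1]
    by auto
  have norms: "(\<lambda>u. norm (\<xi>1 u)^n) \<in> borel_measurable (\<mu> (2 * s))"
    "(\<lambda>u. norm (\<xi>2 u)^n) \<in> borel_measurable (\<mu> (2 * s))" for n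
    using m by measurable
  note noise1 = drift_noise_moments_le[OF B, of h y1, folded \<xi>1_def \<sigma>_def \<tau>_def]
  note noise2 = drift_noise_moments_le[OF A, of h y2, folded \<xi>2_def \<sigma>_def \<tau>_def]
  have moment2: "(\<integral>\<^sup>+u. ennreal (norm (\<xi>1 u - \<xi>2 u)^2) \<partial>\<mu> (2 * s))
      \<le> ennreal (2 * (h^2 * (\<sigma> * (1 + norm y1^2)) + h^2 * (\<sigma> * (1 + norm y2^2))))"
    by (rule nn_integral_le_cmult_add[OF norm_diff_power2_le]) (use norms noise1 noise2 st in auto)
  have moment4: "(\<integral>\<^sup>+u. ennreal (norm (\<xi>1 u - \<xi>2 u)^4) \<partial>\<mu> (2 * s))
      \<le> ennreal (8 * (h^4 * (\<tau> * (1 + norm y1^4)) + h^4 * (\<tau> * (1 + norm y2^4))))"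
    by (rule nn_integral_le_cmult_add[OF norm_diff_power4_le]) (use norms noise1 noise2 st in auto)
  have "(\<integral>\<^sup>+u. ennreal (norm ((y1 + h *\<^sub>R b y1 (phiB s u)) - (y2 + h *\<^sub>R b y2 (phiA s u)))^4) \<partial>\<mu> (2 * s))
      = (\<integral>\<^sup>+u. ennreal (norm (x + (\<xi>1 u - \<xi>2 u))^4) \<partial>\<mu> (2 * s))"
    by (simp only: split)
  also have "\<dots> \<le> ennreal (norm x^4 + 8 * norm x^2 * (2 * (h^2 * (\<sigma> * (1 + norm y1^2)) + h^2 * (\<sigma> * (1 + norm y2^2))))
      + 3 * (8 * (h^4 * (\<tau> * (1 + norm y1^4)) + h^4 * (\<tau> * (1 + norm y2^4)))))"
    by (rule P.nn_integral_norm_add_power4_le[OF _ _ _ moment2 moment4])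
      (use m int st in \<open>auto intro: integrable_inner_right simp: integral_inner_right\<close>)
  also have "\<dots> \<le> ennreal ((1 - K*h/2) * norm (y1 - y2)^4 + coupled_noise s * h^3 * (1 + norm y1^4 + norm y2^4))"
  proof (rule ennreal_leI)
    have "norm x^2 \<le> (1 - K*h) * norm (y1 - y2)^2"
      unfolding x_def by (rule drift_step_contraction[OF A1_lip A1_mono]) (use h in auto)
    from coupled_moment_arith[OF A1_K h(1-3) _ this _ st, of "norm y1^2" "norm y2^2"]
    show "norm x^4 + 8 * norm x^2 * (2 * (h^2 * (\<sigma> * (1 + norm y1^2)) + h^2 * (\<sigma> * (1 + norm y2^2))))
      + 3 * (8 * (h^4 * (\<tau> * (1 + norm y1^4)) + h^4 * (\<tau> * (1 + norm y2^4))))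
      \<le> (1 - K*h/2) * norm (y1 - y2)^4 + coupled_noise s * h^3 * (1 + norm y1^4 + norm y2^4)"
      unfolding coupled_noise_def \<sigma>_def[symmetric] \<tau>_def[symmetric] by (simp flip: power_mult)
  qed
  finally show ?thesis .
qed

subsection \<open>Fourth moments of a single chain\<close>

definition drift_offset :: real where
  "drift_offset = 4 * norm (a 0)^2 / K + 2 * norm (a 0)^2"

definition growth_coeff :: real where
  "growth_coeff = 8 * kappa_pos * (1 + drift_offset) + 3 * kappa_pos"

definition chain_const :: real where
  "chain_const =
     (2 * drift_offset + 16 * \<beta>^2 * CARD('d) + 16 * \<beta>^2 * CARD('d) * kappa_pos)^2 / K
     + (drift_offset^2 + 16 * \<beta>^2 * CARD('d) * drift_offset + 16 * \<beta>^2 * CARD('d) * kappa_pos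
        + 9 * (\<beta>^2)^2 * CARD('d)^2)
     + 2 * growth_coeff"

definition chain_bound :: real where
  "chain_bound = max (enn2real (\<integral>\<^sup>+\<omega>. ennreal (norm (X0 \<omega>)^4) \<partial>M)) (2 * chain_const / K)"

definition coupled_const :: real where
  "coupled_const = 2 * (1536 * kappa_pos^2 / K + 48 * kappa_pos) * (1 + 2 * chain_bound) / K"

definition admissible :: "real \<Rightarrow> bool" where
  "admissible h \<longleftrightarrow> 0 < h \<and> h * K \<le> 1 \<and> h \<le> 1 \<and> 4 * h * L^2 \<le> K \<and> 8 * growth_coeff * h \<le> K"

lemma constants_nonneg:
  "0 \<le> drift_offset" "0 \<le> growth_coeff" "0 \<le> chain_const" "0 \<le> chain_bound" "0 \<le> coupled_const"
proof -
  show d: "0 \<le> drift_offset" unfolding drift_offset_def using A1_K by simp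
  show g: "0 \<le> growth_coeff" unfolding growth_coeff_def using d kappa_pos_nonneg by simp
  show c: "0 \<le> chain_const" unfolding chain_const_def using d g kappa_pos_nonneg A1_K by simp
  show b: "0 \<le> chain_bound" unfolding chain_bound_def by (simp add: le_max_iff_disj enn2real_nonneg)
  show "0 \<le> coupled_const" unfolding coupled_const_def using b kappa_pos_nonneg A1_K by simp
qed

lemma chain_step_moment4_le:
  assumes phi: "halving_map s phi" and k: "k \<ge> 1" and adm: "admissible h"
  shows "(\<integral>\<^sup>+u. (\<integral>\<^sup>+z. ennreal (norm (y + h *\<^sub>R b y (phi u) + (\<beta> * sqrt h) *\<^sub>R z)^4) \<partial>distr M borel (Z k)) \<partial>\<mu> (2 * s))
     \<le> ennreal ((1 - K*h/2) * norm y^4 + chain_const * h)"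
proof -
  have h: "0 < h" "h*K \<le> 1" "h \<le> 1" "4*h*L^2 \<le> K" "8*growth_coeff*h \<le> K"
    using adm unfolding admissible_def by auto
  have s: "s \<ge> 1" using phi unfolding halving_map_def by simp
  interpret P: prob_space "\<mu> (2 * s)" using mu_prob s by simp
  interpret G: std_gaussian_vector M "Z k" using Z_meas Z_gauss[OF k] by unfold_locales
  define c where "c = \<beta> * sqrt h"
  define dd where "dd = real CARD('d)"
  define x where "x = y + h *\<^sub>R a y"
  define \<xi> where "\<xi> u = h *\<^sub>R (b y (phi u) - a y)" for u
  define p where "p = norm y^2"
  define n2 where "n2 = norm x^2"
  define q2 where "q2 = h^2 * (kappa_pos * (1 + p))"
  define q4 where "q4 = h^4 * (kappa_pos * (1 + p^2))"
  have q: "0 \<le> q2" "0 \<le> q4" unfolding q2_def q4_def p_def using kappa_pos_nonneg by auto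
  have c2: "c^2 = \<beta>^2 * h" unfolding c_def using h by (simp add: power_mult_distrib)
  have "c^4 = (c^2)^2" by (simp flip: power_mult)
  then have c4: "c^4 = (\<beta>^2)^2 * h^2" by (simp add: c2 power_mult_distrib)
  have split: "y + h *\<^sub>R b y (phi u) = x + \<xi> u" for u
    unfolding x_def \<xi>_def by (simp add: algebra_simps)
  have \<xi>m: "\<xi> \<in> borel_measurable (\<mu> (2 * s))"
    unfolding \<xi>_def[abs_def] by (rule drift_noise_measurable[OF phi])
  have gauss: "(\<integral>\<^sup>+z. ennreal (norm (y + h *\<^sub>R b y (phi u) + c *\<^sub>R z)^4) \<partial>distr M borel (Z k))
      \<le> ennreal (norm (x + \<xi> u)^4 + (8*(\<beta>^2*h*dd)) * norm (x + \<xi> u)^2 + 9*((\<beta>^2)^2*h^2*dd^2))" for u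
    using G.nn_integral_norm_add_scaleR_power4_le[of "x + \<xi> u" c]
    unfolding split c2 c4 dd_def by (simp add: algebra_simps)
  have s_ge: "kappa_pos / real s \<le> kappa_pos" "kappa_pos / (real s)^2 \<le> kappa_pos"
    using s kappa_pos_nonneg by (auto simp: divide_le_eq intro: mult_le_cancel_left1[THEN iffD2])
  have "h^2 * (kappa_pos / real s * (1 + norm y^2)) \<le> q2"
    unfolding q2_def p_def using s_ge by (intro mult_left_mono mult_right_mono) auto
  then have moment2: "(\<integral>\<^sup>+u. ennreal (norm (\<xi> u)^2) \<partial>\<mu> (2 * s)) \<le> ennreal q2"
    by (rule order_trans[OF drift_noise_moments_le(1)[OF phi, of h y, folded \<xi>_def] ennreal_leI])
  have p2: "p^2 = norm y^4" unfolding p_def by (simp flip: power_mult)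
  have "h^4 * (kappa_pos / (real s)^2 * (1 + norm y^4)) \<le> q4"
    unfolding q4_def p2 using s_ge by (intro mult_left_mono mult_right_mono) auto
  then have moment4: "(\<integral>\<^sup>+u. ennreal (norm (\<xi> u)^4) \<partial>\<mu> (2 * s)) \<le> ennreal q4"
    by (rule order_trans[OF drift_noise_moments_le(2)[OF phi, of h y, folded \<xi>_def] ennreal_leI])
  have mean_zero: "integrable (\<mu> (2 * s)) \<xi>" "(\<integral>u. \<xi> u \<partial>\<mu> (2 * s)) = 0"
    using drift_noise_mean_zero[OF phi, of h y] unfolding \<xi>_def by simp_all
  have n2_sq: "n2^2 = norm x^4" unfolding n2_def by (simp flip: power_mult)
  have X4: "(\<integral>\<^sup>+u. ennreal (norm (x + \<xi> u)^4) \<partial>\<mu> (2 * s)) \<le> ennreal (n2^2 + 8 * n2 * q2 + 3 * q4)"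
    unfolding n2_sq unfolding n2_def
    by (rule P.nn_integral_norm_add_power4_le[OF \<xi>m integrable_inner_right[OF mean_zero(1)] _ moment2 moment4 q])
      (simp add: integral_inner_right[OF mean_zero(1)] mean_zero(2))
  have X2: "(\<integral>\<^sup>+u. ennreal (norm (x + \<xi> u)^2) \<partial>\<mu> (2 * s)) \<le> ennreal (2 * (n2 + q2))"
  proof (rule nn_integral_le_cmult_add[where f="\<lambda>_. n2" and g="\<lambda>u. norm (\<xi> u)^2"])
    show "norm (x + \<xi> u)^2 \<le> 2 * (n2 + norm (\<xi> u)^2)" for u unfolding n2_def by (rule norm_add_power2_le)
    show "(\<integral>\<^sup>+u. ennreal n2 \<partial>\<mu> (2 * s)) \<le> ennreal n2" by (simp add: P.emeasure_space_1)
    show "(\<lambda>u. norm (\<xi> u)^2) \<in> borel_measurable (\<mu> (2 * s))" using \<xi>m by measurable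
  qed (use moment2 q in \<open>simp_all add: n2_def\<close>)
  have Xm: "(\<lambda>u. norm (x + \<xi> u)^4) \<in> borel_measurable (\<mu> (2 * s))"
    "(\<lambda>u. norm (x + \<xi> u)^2) \<in> borel_measurable (\<mu> (2 * s))"
    using \<xi>m by measurable
  have "(\<integral>\<^sup>+u. (\<integral>\<^sup>+z. ennreal (norm (y + h *\<^sub>R b y (phi u) + c *\<^sub>R z)^4) \<partial>distr M borel (Z k)) \<partial>\<mu> (2 * s))
     \<le> (\<integral>\<^sup>+u. ennreal (norm (x + \<xi> u)^4 + (8*(\<beta>^2*h*dd)) * norm (x + \<xi> u)^2 + 9*((\<beta>^2)^2*h^2*dd^2)) \<partial>\<mu> (2 * s))"
    by (intro nn_integral_mono gauss)
  also have "\<dots> \<le> ennreal ((n2^2 + 8 * n2 * q2 + 3 * q4) + (8*(\<beta>^2*h*dd)) * (2 * (n2 + q2)) + 9*((\<beta>^2)^2*h^2*dd^2))"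
    by (rule P.nn_integral_add_cmult_const_le[OF Xm(1) _ Xm(2) _ _ _ X4 X2]) (use h q in \<open>simp_all add: n2_def dd_def\<close>)
  also have "\<dots> \<le> ennreal ((1 - K*h/2) * norm y^4 + chain_const * h)"
  proof (rule ennreal_leI)
    have "n2 \<le> (1 - K*h) * p + drift_offset * h"
      unfolding n2_def p_def x_def drift_offset_def
      by (rule drift_step_norm_le[OF A1_lip A1_mono A1_K]) (use h in auto)
    have "n2^2 + 8*n2*(h^2*(kappa_pos*(1+p))) + 3*(h^4*(kappa_pos*(1+p^2)))
        + 8*(\<beta>^2*h*dd)*(2*n2 + 2*(h^2*(kappa_pos*(1+p)))) + 9*((\<beta>^2)^2*h^2*dd^2)
      \<le> (1 - K*h/2) * p^2 + ((2*drift_offset + 16*\<beta>^2*dd + 16*\<beta>^2*dd*kappa_pos)^2/K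
         + (drift_offset^2 + 16*\<beta>^2*dd*drift_offset + 16*\<beta>^2*dd*kappa_pos + 9*(\<beta>^2)^2*dd^2)
         + 2*(8*kappa_pos*(1+drift_offset) + 3*kappa_pos)) * h"
      by (rule chain_moment_arith[OF A1_K h(1-3) _ _ \<open>n2 \<le> _\<close>])
        (use h(5) constants_nonneg kappa_pos_nonneg in \<open>auto simp: growth_coeff_def n2_def p_def dd_def\<close>)
    then show "(n2^2 + 8 * n2 * q2 + 3 * q4) + (8*(\<beta>^2*h*dd)) * (2 * (n2 + q2)) + 9*((\<beta>^2)^2*h^2*dd^2)
      \<le> (1 - K*h/2) * norm y^4 + chain_const * h"
      unfolding chain_const_def growth_coeff_def dd_def q2_def q4_def p2[symmetric]
      by (simp add: algebra_simps)
  qed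
  finally show ?thesis unfolding c_def .
qed

lemma chain_moment4_step:
  assumes phi: "halving_map s phi" and h: "admissible h"
  shows "(\<integral>\<^sup>+\<omega>. ennreal (norm (chain s h phi (Suc k) \<omega>)^4) \<partial>M)
    \<le> ennreal (1 - K*h/2) * (\<integral>\<^sup>+\<omega>. ennreal (norm (chain s h phi k \<omega>)^4) \<partial>M) + ennreal (chain_const * h)"
proof -
  have s: "s \<ge> 1" and pm: "phi \<in> borel_measurable borel" using phi unfolding halving_map_def by auto
  have kh: "0 \<le> h" "0 \<le> 1 - K*h/2" using h unfolding admissible_def by (auto simp: mult.commute)
  define F where "F p = ennreal (norm (fst (fst p) + h *\<^sub>R b (fst (fst p)) (phi (fst (snd p)))
      + (\<beta> * sqrt h) *\<^sub>R snd (snd p))^4)" for p :: "((real^'d) \<times> (real^'d)) \<times> ((real^'n) \<times> (real^'d))"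
  have "(\<lambda>p::((real^'d) \<times> (real^'d)) \<times> ((real^'n) \<times> (real^'d)). b (fst (fst p)) (phi (fst (snd p))))
      \<in> borel_measurable ((borel \<Otimes>\<^sub>M borel) \<Otimes>\<^sub>M (borel \<Otimes>\<^sub>M borel))"
    by (rule b_measurable_comp) (use pm in measurable)
  then have F: "F \<in> borel_measurable (borel \<Otimes>\<^sub>M (borel \<Otimes>\<^sub>M borel))"
    unfolding F_def[abs_def] borel_prod[symmetric] by measurable
  define g where "g w = ennreal ((1 - K*h/2) * norm (fst w)^4 + chain_const * h)" for w :: "(real^'d) \<times> (real^'d)"
  have g: "g \<in> borel_measurable borel"
    unfolding g_def[abs_def] borel_prod[symmetric] by measurable
  have "(\<integral>\<^sup>+\<omega>. ennreal (norm (chain s h phi (Suc k) \<omega>)^4) \<partial>M)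
      = (\<integral>\<^sup>+\<omega>. F ((chain s h phi k \<omega>, chain s h phi k \<omega>), (U s k \<omega>, Z (Suc k) \<omega>)) \<partial>M)"
    unfolding F_def by (simp add: chain_Suc)
  also have "\<dots> \<le> (\<integral>\<^sup>+\<omega>. g (chain s h phi k \<omega>, chain s h phi k \<omega>) \<partial>M)"
    by (rule nn_integral_chain_step_le[OF s pm pm F g])
      (simp add: F_def g_def chain_step_moment4_le[OF phi _ h])
  also have "\<dots> = (\<integral>\<^sup>+\<omega>. ennreal ((1 - K*h/2) * norm (chain s h phi k \<omega>)^4 + chain_const * h * (1 + 0)) \<partial>M)"
    unfolding g_def by simp
  also have "\<dots> \<le> ennreal (1 - K*h/2) * (\<integral>\<^sup>+\<omega>. ennreal (norm (chain s h phi k \<omega>)^4) \<partial>M) + ennreal (chain_const * h * (1 + 0))"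
  proof (rule nn_integral_affine_le)
    show "(\<lambda>\<omega>. norm (chain s h phi k \<omega>)^4) \<in> borel_measurable M"
      using chain_measurable[OF pm] by measurable
  qed (use kh constants_nonneg in auto)
  finally show ?thesis by simp
qed

lemma chain_moment4_le:
  assumes phi: "halving_map s phi" and h: "admissible h"
  shows "(\<integral>\<^sup>+\<omega>. ennreal (norm (chain s h phi k \<omega>)^4) \<partial>M) \<le> ennreal chain_bound"
proof (rule ennreal_affine_recursion_le[where x="\<lambda>k. \<integral>\<^sup>+\<omega>. ennreal (norm (chain s h phi k \<omega>)^4) \<partial>M"
      and q="K*h/2" and c="chain_const * h"])
  show "(\<integral>\<^sup>+\<omega>. ennreal (norm (chain s h phi (Suc k) \<omega>)^4) \<partial>M)
      \<le> ennreal (1 - K*h/2) * (\<integral>\<^sup>+\<omega>. ennreal (norm (chain s h phi k \<omega>)^4) \<partial>M) + ennreal (chain_const * h)" for k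
    by (rule chain_moment4_step[OF phi h])
  have "(\<integral>\<^sup>+\<omega>. ennreal (norm (X0 \<omega>)^4) \<partial>M) = ennreal (enn2real (\<integral>\<^sup>+\<omega>. ennreal (norm (X0 \<omega>)^4) \<partial>M))"
    using X0_mom by (simp add: ennreal_enn2real less_top[symmetric])
  also have "\<dots> \<le> ennreal chain_bound"
    unfolding chain_bound_def by (rule ennreal_leI) simp
  finally show "(\<integral>\<^sup>+\<omega>. ennreal (norm (chain s h phi 0 \<omega>)^4) \<partial>M) \<le> ennreal chain_bound"
    by simp
  have "2 * chain_const / K \<le> chain_bound" unfolding chain_bound_def by simp
  then show "chain_const * h \<le> K*h/2 * chain_bound"
    using h A1_K unfolding admissible_def by (simp add: divide_le_eq algebra_simps)
qed (use h A1_K constants_nonneg in \<open>auto simp: admissible_def mult.commute\<close>)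

lemma chain_pair_moment4_le:
  assumes s: "s \<ge> 1" and h: "admissible h"
  shows "(\<integral>\<^sup>+\<omega>. ennreal (norm (chain s h (phiB s) k \<omega>)^4 + norm (chain s h (phiA s) k \<omega>)^4) \<partial>M)
    \<le> ennreal (2 * chain_bound)"
proof -
  have pA: "phiA s \<in> borel_measurable borel" and pB: "phiB s \<in> borel_measurable borel"
    using A8_meas1 A8_meas2 s by auto
  have mB: "(\<lambda>\<omega>. ennreal (norm (chain s h (phiB s) k \<omega>)^4)) \<in> borel_measurable M"
    using chain_measurable[OF pB] by measurable
  have mA: "(\<lambda>\<omega>. ennreal (norm (chain s h (phiA s) k \<omega>)^4)) \<in> borel_measurable M"
    using chain_measurable[OF pA] by measurable
  have "(\<integral>\<^sup>+\<omega>. ennreal (norm (chain s h (phiB s) k \<omega>)^4 + norm (chain s h (phiA s) k \<omega>)^4) \<partial>M)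
      = (\<integral>\<^sup>+\<omega>. ennreal (norm (chain s h (phiB s) k \<omega>)^4) + ennreal (norm (chain s h (phiA s) k \<omega>)^4) \<partial>M)"
    by (intro nn_integral_cong) (simp add: ennreal_plus)
  also have "\<dots> = (\<integral>\<^sup>+\<omega>. ennreal (norm (chain s h (phiB s) k \<omega>)^4) \<partial>M)
      + (\<integral>\<^sup>+\<omega>. ennreal (norm (chain s h (phiA s) k \<omega>)^4) \<partial>M)"
    by (rule nn_integral_add[OF mB mA])
  also have "\<dots> \<le> ennreal chain_bound + ennreal chain_bound"
    using chain_moment4_le[OF halving_map_phiB[OF s] h] chain_moment4_le[OF halving_map_phiA[OF s] h]
    by (rule add_mono)
  also have "\<dots> = ennreal (chain_bound + chain_bound)"
    by (rule ennreal_plus[symmetric]) (use constants_nonneg in auto)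
  also have "\<dots> = ennreal (2 * chain_bound)" by simp
  finally show "(\<integral>\<^sup>+\<omega>. ennreal (norm (chain s h (phiB s) k \<omega>)^4 + norm (chain s h (phiA s) k \<omega>)^4) \<partial>M)
      \<le> ennreal (2 * chain_bound)" .
qed

subsection \<open>Fourth moment of the difference\<close>

lemma coupled_moment4_step:
  assumes s: "s \<ge> 1" and h: "admissible h"
  shows "(\<integral>\<^sup>+\<omega>. ennreal (norm (chain s h (phiB s) (Suc k) \<omega> - chain s h (phiA s) (Suc k) \<omega>)^4) \<partial>M)
    \<le> ennreal (1 - K*h/2) * (\<integral>\<^sup>+\<omega>. ennreal (norm (chain s h (phiB s) k \<omega> - chain s h (phiA s) k \<omega>)^4) \<partial>M)
      + ennreal (coupled_noise s * h^3 * (1 + 2 * chain_bound))"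
proof -
  have hs: "0 < h" "h*K \<le> 1" "h \<le> 1" "4 * h * L^2 \<le> K" "0 \<le> 1 - K*h/2"
    using h unfolding admissible_def by (auto simp: mult.commute)
  have "0 \<le> h * L^2" using hs by simp
  then have hL: "h * L^2 \<le> K" using hs(4) by linarith
  have pA: "phiA s \<in> borel_measurable borel" and pB: "phiB s \<in> borel_measurable borel"
    using A8_meas1 A8_meas2 s by auto
  have CD: "0 \<le> coupled_noise s * h^3" unfolding coupled_noise_def using A1_K hs kappa_pos_nonneg by auto
  define c where "c = \<beta> * sqrt h"
  define F where "F p = ennreal (norm ((fst (fst p) + h *\<^sub>R b (fst (fst p)) (phiB s (fst (snd p))) + c *\<^sub>R snd (snd p))
      - (snd (fst p) + h *\<^sub>R b (snd (fst p)) (phiA s (fst (snd p))) + c *\<^sub>R snd (snd p)))^4)"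
    for p :: "((real^'d) \<times> (real^'d)) \<times> ((real^'n) \<times> (real^'d))"
  have "(\<lambda>p::((real^'d) \<times> (real^'d)) \<times> ((real^'n) \<times> (real^'d)). b (fst (fst p)) (phiB s (fst (snd p))))
      \<in> borel_measurable ((borel \<Otimes>\<^sub>M borel) \<Otimes>\<^sub>M (borel \<Otimes>\<^sub>M borel))"
    "(\<lambda>p::((real^'d) \<times> (real^'d)) \<times> ((real^'n) \<times> (real^'d)). b (snd (fst p)) (phiA s (fst (snd p))))
      \<in> borel_measurable ((borel \<Otimes>\<^sub>M borel) \<Otimes>\<^sub>M (borel \<Otimes>\<^sub>M borel))"
    by (rule b_measurable_comp; use pA pB in measurable)+
  then have F: "F \<in> borel_measurable (borel \<Otimes>\<^sub>M (borel \<Otimes>\<^sub>M borel))"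
    unfolding F_def[abs_def] borel_prod[symmetric] by measurable
  define g where "g w = ennreal ((1 - K*h/2) * norm (fst w - snd w)^4
      + coupled_noise s * h^3 * (1 + (norm (fst w)^4 + norm (snd w)^4)))" for w :: "(real^'d) \<times> (real^'d)"
  have g: "g \<in> borel_measurable borel"
    unfolding g_def[abs_def] borel_prod[symmetric] by measurable
  have step: "(\<integral>\<^sup>+u. (\<integral>\<^sup>+z. F (w, (u, z)) \<partial>distr M borel (Z (Suc k))) \<partial>\<mu> (2 * s)) \<le> g w" for w
  proof -
    interpret PZ: prob_space "distr M borel (Z (Suc k))" by (rule prob_space_distr) (rule Z_meas)
    have "(\<integral>\<^sup>+u. (\<integral>\<^sup>+z. F (w, (u, z)) \<partial>distr M borel (Z (Suc k))) \<partial>\<mu> (2 * s))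
       = (\<integral>\<^sup>+u. ennreal (norm ((fst w + h *\<^sub>R b (fst w) (phiB s u)) - (snd w + h *\<^sub>R b (snd w) (phiA s u)))^4) \<partial>\<mu> (2 * s))"
      unfolding F_def using PZ.emeasure_space_1 by (intro nn_integral_cong) (simp add: algebra_simps)
    also have "\<dots> \<le> g w"
      using coupled_step_moment4_le[OF s hs(1-3) hL, of "fst w" "snd w"] unfolding g_def by (simp add: add.assoc)
    finally show ?thesis .
  qed
  note Y = chain_pair_moment4_le[OF s h, of k]
  have "(\<integral>\<^sup>+\<omega>. ennreal (norm (chain s h (phiB s) (Suc k) \<omega> - chain s h (phiA s) (Suc k) \<omega>)^4) \<partial>M)
      = (\<integral>\<^sup>+\<omega>. F ((chain s h (phiB s) k \<omega>, chain s h (phiA s) k \<omega>), (U s k \<omega>, Z (Suc k) \<omega>)) \<partial>M)"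
    unfolding F_def c_def by (simp add: chain_Suc)
  also have "\<dots> \<le> (\<integral>\<^sup>+\<omega>. g (chain s h (phiB s) k \<omega>, chain s h (phiA s) k \<omega>) \<partial>M)"
    by (rule nn_integral_chain_step_le[OF s pB pA F g step])
  also have "\<dots> \<le> ennreal (1 - K*h/2) * (\<integral>\<^sup>+\<omega>. ennreal (norm (chain s h (phiB s) k \<omega> - chain s h (phiA s) k \<omega>)^4) \<partial>M)
      + ennreal (coupled_noise s * h^3 * (1 + 2 * chain_bound))"
    unfolding g_def fst_conv snd_conv
  proof (rule nn_integral_affine_le[OF _ _ _ _ Y])
    show "(\<lambda>\<omega>. norm (chain s h (phiB s) k \<omega> - chain s h (phiA s) k \<omega>)^4) \<in> borel_measurable M"
      using chain_measurable[OF pA] chain_measurable[OF pB] by measurable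
    show "(\<lambda>\<omega>. norm (chain s h (phiB s) k \<omega>)^4 + norm (chain s h (phiA s) k \<omega>)^4) \<in> borel_measurable M"
      using chain_measurable[OF pA] chain_measurable[OF pB] by measurable
  qed (use hs CD constants_nonneg in auto)
  finally show ?thesis .
qed

lemma coupled_moment4_le:
  assumes s: "s \<ge> 1" and h: "admissible h"
  shows "(\<integral>\<^sup>+\<omega>. ennreal (norm (chain s h (phiB s) k \<omega> - chain s h (phiA s) k \<omega>)^4) \<partial>M)
    \<le> ennreal (coupled_const * h^2 / (real s)^2)"
proof (rule ennreal_affine_recursion_le[where
      x="\<lambda>k. \<integral>\<^sup>+\<omega>. ennreal (norm (chain s h (phiB s) k \<omega> - chain s h (phiA s) k \<omega>)^4) \<partial>M"
      and q="K*h/2" and c="coupled_noise s * h^3 * (1 + 2 * chain_bound)"])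
  have hs: "0 < h" "h * K \<le> 1" using h unfolding admissible_def by auto
  show "(\<integral>\<^sup>+\<omega>. ennreal (norm (chain s h (phiB s) (Suc k) \<omega> - chain s h (phiA s) (Suc k) \<omega>)^4) \<partial>M)
    \<le> ennreal (1 - K*h/2) * (\<integral>\<^sup>+\<omega>. ennreal (norm (chain s h (phiB s) k \<omega> - chain s h (phiA s) k \<omega>)^4) \<partial>M)
      + ennreal (coupled_noise s * h^3 * (1 + 2 * chain_bound))" for k
    by (rule coupled_moment4_step[OF s h])
  show "coupled_noise s * h^3 * (1 + 2 * chain_bound) \<le> K*h/2 * (coupled_const * h^2 / (real s)^2)"
    using s A1_K hs unfolding coupled_noise_def coupled_const_def
    by (simp add: field_simps power2_eq_square power3_eq_cube)
  show "0 \<le> coupled_noise s * h^3 * (1 + 2 * chain_bound)"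
    unfolding coupled_noise_def using A1_K hs kappa_pos_nonneg constants_nonneg by auto
qed (use h A1_K constants_nonneg in \<open>auto simp: admissible_def mult.commute\<close>)

lemma admissible_small_steps: "\<exists>h0>0. \<forall>h. 0 < h \<longrightarrow> h < h0 \<longrightarrow> admissible h"
proof (intro exI conjI allI impI)
  define D where "D = 4*L^2 + 8*growth_coeff + 1"
  have D: "0 < D" unfolding D_def using constants_nonneg by (simp add: add_nonneg_pos)
  show "0 < min 1 (min (1/K) (K/D))" using A1_K D by auto
  fix h assume h: "0 < h" "h < min 1 (min (1/K) (K/D))"
  then have hK: "h * K \<le> 1" and hD: "h * D \<le> K" using A1_K D by (auto simp: field_simps)
  have "4*L^2 \<le> D" "8*growth_coeff \<le> D" unfolding D_def using constants_nonneg by auto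
  then have "h*(4*L^2) \<le> h*D" "h*(8*growth_coeff) \<le> h*D"
    using h by (simp_all add: mult_left_mono)
  moreover have "4*h*L^2 = h*(4*L^2)" "8*growth_coeff*h = h*(8*growth_coeff)" by simp_all
  ultimately show "admissible h" unfolding admissible_def using h hK hD by linarith
qed

theorem coupled_difference_moment4_le:
  "\<exists>h0>0. \<exists>C>0. \<forall>s::nat. \<forall>h. \<forall>k::nat. s \<ge> 1 \<longrightarrow> 0 < h \<longrightarrow> h < h0 \<longrightarrow> k \<ge> 1 \<longrightarrow>
     (\<integral>\<^sup>+\<omega>. ennreal ((norm (
          fine_chain h \<beta> b X0 Z (\<lambda>k \<omega>. phiB s (U s k \<omega>)) k \<omega>
        - fine_chain h \<beta> b X0 Z (\<lambda>k \<omega>. phiA s (U s k \<omega>)) k \<omega>))^4) \<partial>M)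
       \<le> ennreal (C * h^2 / (real s)^2)"
proof -
  obtain h0 where h0: "0 < h0" "\<And>h. 0 < h \<Longrightarrow> h < h0 \<Longrightarrow> admissible h"
    using admissible_small_steps by blast
  have "(\<integral>\<^sup>+\<omega>. ennreal (norm (chain s h (phiB s) k \<omega> - chain s h (phiA s) k \<omega>)^4) \<partial>M)
      \<le> ennreal ((coupled_const + 1) * h^2 / (real s)^2)" if "s \<ge> 1" "0 < h" "h < h0" for s h k
    using coupled_moment4_le[OF that(1) h0(2)[OF that(2,3)], of k]
    by (rule order_trans) (intro ennreal_leI divide_right_mono mult_right_mono; simp)
  moreover have "0 < coupled_const + 1" using constants_nonneg by simp
  ultimately show ?thesis
    unfolding chain_def using h0(1) by blast
qed

end

theorem lemma6:
  fixes a :: "real^'d \<Rightarrow> real^'d"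
    and a' :: "real^'d \<Rightarrow> ((real^'d) \<Rightarrow>\<^sub>L (real^'d))"
    and a'' :: "real^'d \<Rightarrow> ((real^'d) \<Rightarrow>\<^sub>L ((real^'d) \<Rightarrow>\<^sub>L (real^'d)))"
    and b :: "real^'d \<Rightarrow> real^'n \<Rightarrow> real^'d"
    and \<mu> :: "nat \<Rightarrow> (real^'n) measure"
    and phiA phiB :: "nat \<Rightarrow> real^'n \<Rightarrow> real^'n"
    and M :: "'w measure"
    and X0 :: "'w \<Rightarrow> real^'d"
    and Z :: "nat \<Rightarrow> 'w \<Rightarrow> real^'d"
    and U :: "nat \<Rightarrow> nat \<Rightarrow> 'w \<Rightarrow> real^'n"
    and \<beta> L K Ca1 Ca2 \<kappa> L04 :: real
  assumes beta: "\<beta> \<ge> 0"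
    \<comment> \<open>standing setting: laws of drift variables and unbiasedness\<close>
    and b_meas: "case_prod b \<in> borel_measurable borel"
    and mu_prob: "\<And>s. s \<ge> 1 \<Longrightarrow> prob_space (\<mu> s)"
    and mu_sets: "\<And>s. s \<ge> 1 \<Longrightarrow> sets (\<mu> s) = sets borel"
    and unbiased_int: "\<And>s x. s \<ge> 1 \<Longrightarrow> integrable (\<mu> s) (b x)"
    and unbiased: "\<And>s x. s \<ge> 1 \<Longrightarrow> (\<integral>u. b x u \<partial>\<mu> s) = a x"
    \<comment> \<open>(A1)\<close>
    and A1_lip: "\<And>x y. norm (a x - a y) \<le> L * norm (x - y)"
    and A1_K: "K > 0"
    and A1_mono: "\<And>x y. inner (x - y) (a x - a y) \<le> - K * (norm (x - y))\<^sup>2"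
    and A1_d1: "\<And>x. (a has_derivative blinfun_apply (a' x)) (at x)"
    and A1_d2: "\<And>x. (a' has_derivative blinfun_apply (a'' x)) (at x)"
    and A1_cont: "continuous_on UNIV a''"
    and A1_b1: "\<And>x i. norm (a' x (axis i 1)) \<le> Ca1"
    and A1_b2: "\<And>x i j. norm (a'' x (axis i 1) (axis j 1)) \<le> Ca2"
    \<comment> \<open>(A3), with sigma_s^2 <= kappa/s\<close>
    and A3: "\<And>s x. s \<ge> 1 \<Longrightarrow>
       (\<integral>\<^sup>+u. ennreal ((norm (b x u - a x))^2) \<partial>\<mu> s) \<le> ennreal (\<kappa> / real s * (1 + (norm x)^2))"
    \<comment> \<open>(A4), with sigma^(4)_s <= kappa/s^2\<close>
    and A4: "\<And>s x. s \<ge> 1 \<Longrightarrow>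
       (\<integral>\<^sup>+u. ennreal ((norm (b x u - a x))^4) \<partial>\<mu> s) \<le> ennreal (\<kappa> / (real s)^2 * (1 + (norm x)^4))"
    \<comment> \<open>(A7)\<close>
    and A7: "\<And>x. (norm (a x))^4 \<le> L04 * (1 + (norm x)^4)"
    \<comment> \<open>(A8): a level-2s drift variable determines two level-s drift variables\<close>
    and A8_meas1: "\<And>s. s \<ge> 1 \<Longrightarrow> phiA s \<in> borel_measurable borel"
    and A8_meas2: "\<And>s. s \<ge> 1 \<Longrightarrow> phiB s \<in> borel_measurable borel"
    and A8_law1: "\<And>s. s \<ge> 1 \<Longrightarrow> distr (\<mu> (2 * s)) borel (phiA s) = \<mu> s"
    and A8_law2: "\<And>s. s \<ge> 1 \<Longrightarrow> distr (\<mu> (2 * s)) borel (phiB s) = \<mu> s"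
    and A8_split: "\<And>s. s \<ge> 1 \<Longrightarrow> AE u in \<mu> (2 * s).
        \<forall>x. b x u = (1/2) *\<^sub>R b x (phiA s u) + (1/2) *\<^sub>R b x (phiB s u)"
    \<comment> \<open>random inputs of the coupled chains\<close>
    and M_prob: "prob_space M"
    and X0_meas: "X0 \<in> borel_measurable M"
    and X0_mom: "(\<integral>\<^sup>+\<omega>. ennreal ((norm (X0 \<omega>))^4) \<partial>M) < \<infinity>"
    and Z_meas: "\<And>k. Z k \<in> borel_measurable M"
    and Z_gauss: "\<And>k. k \<ge> 1 \<Longrightarrow> std_gaussian_vec M (Z k)"
    and U_meas: "\<And>s k. U s k \<in> borel_measurable M"
    and U_law: "\<And>s k. s \<ge> 1 \<Longrightarrow> distr M borel (U s k) = \<mu> (2 * s)"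
    and indep: "\<And>s. s \<ge> 1 \<Longrightarrow> rv_indep M X0 Z (U s)"
  shows "\<exists>h0>0. \<exists>C>0. \<forall>s::nat. \<forall>h. \<forall>k::nat. s \<ge> 1 \<longrightarrow> 0 < h \<longrightarrow> h < h0 \<longrightarrow> k \<ge> 1 \<longrightarrow>
     (\<integral>\<^sup>+\<omega>. ennreal ((norm (
          fine_chain h \<beta> b X0 Z (\<lambda>k \<omega>. phiB s (U s k \<omega>)) k \<omega>
        - fine_chain h \<beta> b X0 Z (\<lambda>k \<omega>. phiA s (U s k \<omega>)) k \<omega>))^4) \<partial>M)
       \<le> ennreal (C * h^2 / (real s)^2)"
proof -
  \<comment> \<open>Only the laws of the two halves in (A8) enter, not the splitting identity.\<close>
  interpret coupled_chains M a b \<mu> phiA phiB X0 Z U \<beta> L K \<kappa>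
    by (rule coupled_chains.intro[OF M_prob], rule coupled_chains_axioms.intro) (assumption | rule assms)+
  show ?thesis by (rule coupled_difference_moment4_le)
qed

end
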